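(* Let $d\ge3$ and let $u\in\mathbb{R}^d$. For all sufficiently small $\beta>0$, every finite $\Lambda\subset\mathbb{Z}^d$ and every disorder configuration $\xi\in\mathbb{R}^{\mathbb{Z}^d}$, $$F_{\beta,u,\Lambda}[\xi_\Lambda]\le-|\Lambda|\Big(\sigma^{A-\beta}_\Lambda-\sigma^{C_2/2}_\Lambda\Big)+\sum_{x,y\in\Lambda\cup\partial\Lambda,|x-y|=1}(B+V(0))-\frac{A-\beta-C_2/2}{2}\sum_{x,y\in\Lambda\cup\partial\Lambda,|x-y|=1}((x-y)\cdot u)^2+\frac12\Big(\frac1{A-\beta}-\frac2{C_2}\Big)\langle\xi,G_\Lambda\xi\rangle_\Lambda.$$
   Context: $V\in C^2(\mathbb{R})$ is even, with $V(s)\ge As^2-B$ for all $s$ (some $A>0$, $B\in\mathbb{R}$) and $V''(s)\le C_2$ (some $C_2>0$). For finite $\Lambda\subset\mathbb{Z}^d$, $\partial\Lambda=\{x\notin\Lambda:\|x-y\|_1=1\text{ for some }y\in\Lambda\}$; all sums over "$x,y$ with $|x-y|=1$" run over ordered nearest-neighbour pairs. For $\psi\in\mathbb{R}^{\mathbb{Z}^d}$, $$H^\psi_\Lambda[\xi](\phi)=\tfrac12\sum_{x,y\in\Lambda,|x-y|=1}V(\phi(x)-\phi(y))+\sum_{x\in\Lambda,y\in\partial\Lambda,|x-y|=1}V(\phi(x)-\psi(y))+\tfrac12\sum_{x\in\Lambda}\xi(x)\phi(x),$$ and $\nu^\psi_\Lambda[\xi](\mathrm{d}\phi)=\frac1Ze^{-H^\psi_\Lambda[\xi](\phi)}\prod_{x\in\Lambda}\mathrm{d}\phi(x)\prod_{x\notin\Lambda}\delta_{\psi(x)}(\mathrm{d}\phi(x))$.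 With $\psi_u(x)=x\cdot u$, $$F_{\beta,u,\Lambda}[\xi_\Lambda]=\log\int\nu^{\psi_u}_\Lambda[\xi](\mathrm{d}\phi)\exp\Big(\frac\beta2\sum_{x,y\in\mathbb{Z}^d,|x-y|=1}(\phi(x)-\phi(y)-u\cdot(x-y))^2\Big).$$ For $c>0$, $\sigma^c_\Lambda=-\frac1{|\Lambda|}\log\int_{\mathbb{R}^\Lambda}\exp\big(-\frac c2\sum_{x,y\in\Lambda,|x-y|=1}(\phi(x)-\phi(y))^2-c\sum_{x\in\Lambda,y\in\partial\Lambda,|x-y|=1}\phi(x)^2\big)\prod_{x\in\Lambda}\mathrm{d}\phi(x)$ (the surface tension of the model without disorder, potential $V(s)=cs^2$, tilt $0$). $G_\Lambda(x,y)$ is the Green's function: the expected number of visits to $y$ by a simple random walk started at $x$ before its first exit from $\Lambda$; $\langle\xi,G_\Lambda\xi\rangle_\Lambda=\sum_{x,y\in\Lambda}\xi(x)G_\Lambda(x,y)\xi(y)$. *)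

theory Defs
  imports "HOL-Analysis.Analysis"
begin

text \<open>Sites of Z^d are vectors int^'d; the dimension d is CARD('d).\<close>

definition l1dist :: "int^'d \<Rightarrow> int^'d \<Rightarrow> int" where
  "l1dist x y = (\<Sum>i\<in>UNIV. \<bar>x$i - y$i\<bar>)"

definition nbr :: "int^'d \<Rightarrow> int^'d \<Rightarrow> bool" where
  "nbr x y \<longleftrightarrow> l1dist x y = 1"

definition nnpairs :: "(int^'d) set \<Rightarrow> ((int^'d) \<times> (int^'d)) set" where
  "nnpairs S = {(x,y). x \<in> S \<and> y \<in> S \<and> nbr x y}"

definition bdry :: "(int^'d) set \<Rightarrow> (int^'d) set" where
  "bdry \<Lambda> = {x. x \<notin> \<Lambda> \<and> (\<exists>y\<in>\<Lambda>. nbr x y)}"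

definition zdot :: "int^'d \<Rightarrow> real^'d \<Rightarrow> real" where
  "zdot x u = (\<Sum>i\<in>UNIV. real_of_int (x$i) * u$i)"

definition tilt :: "real^'d \<Rightarrow> int^'d \<Rightarrow> real" where
  "tilt u = (\<lambda>x. zdot x u)"

definition glue :: "(int^'d) set \<Rightarrow> (int^'d \<Rightarrow> real) \<Rightarrow> (int^'d \<Rightarrow> real) \<Rightarrow> int^'d \<Rightarrow> real" where
  "glue \<Lambda> \<phi> \<psi> = (\<lambda>x. if x \<in> \<Lambda> then \<phi> x else \<psi> x)"

definition hamiltonian ::
  "(real \<Rightarrow> real) \<Rightarrow> (int^'d) set \<Rightarrow> (int^'d \<Rightarrow> real) \<Rightarrow> (int^'d \<Rightarrow> real) \<Rightarrow> (int^'d \<Rightarrow> real) \<Rightarrow> real" where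
  "hamiltonian V \<Lambda> \<psi> \<xi> \<phi> =
     1/2 * (\<Sum>(x,y)\<in>nnpairs \<Lambda>. V (\<phi> x - \<phi> y))
     + (\<Sum>(x,y)\<in>{(x,y). x \<in> \<Lambda> \<and> y \<in> bdry \<Lambda> \<and> nbr x y}. V (\<phi> x - \<psi> y))
     + 1/2 * (\<Sum>x\<in>\<Lambda>. \<xi> x * \<phi> x)"

definition fieldM :: "(int^'d) set \<Rightarrow> (int^'d \<Rightarrow> real) measure" where
  "fieldM \<Lambda> = PiM \<Lambda> (\<lambda>_. lborel)"

definition grad_energy :: "real^'d \<Rightarrow> (int^'d \<Rightarrow> real) \<Rightarrow> real" where
  "grad_energy u f = infsum (\<lambda>(x,y). (f x - f y - zdot (x - y) u)^2) {(x,y). nbr x y}"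

definition free_energy ::
  "(real \<Rightarrow> real) \<Rightarrow> real \<Rightarrow> real^'d \<Rightarrow> (int^'d) set \<Rightarrow> (int^'d \<Rightarrow> real) \<Rightarrow> real" where
  "free_energy V \<beta> u \<Lambda> \<xi> =
     ln ((integral\<^sup>L (fieldM \<Lambda>)
            (\<lambda>\<phi>. exp (- hamiltonian V \<Lambda> (tilt u) \<xi> \<phi>)
                  * exp (\<beta> / 2 * grad_energy u (glue \<Lambda> \<phi> (tilt u)))))
         / integral\<^sup>L (fieldM \<Lambda>) (\<lambda>\<phi>. exp (- hamiltonian V \<Lambda> (tilt u) \<xi> \<phi>)))"

text \<open>Surface tension of the Gaussian model with potential c s^2, tilt 0.\<close>
definition sigma :: "real \<Rightarrow> (int^'d) set \<Rightarrow> real" where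
  "sigma c \<Lambda> = - (1 / real (card \<Lambda>)) *
     ln (integral\<^sup>L (fieldM \<Lambda>)
          (\<lambda>\<phi>. exp (- (c/2) * (\<Sum>(x,y)\<in>nnpairs \<Lambda>. (\<phi> x - \<phi> y)^2)
                     - c * (\<Sum>(x,y)\<in>{(x,y). x \<in> \<Lambda> \<and> y \<in> bdry \<Lambda> \<and> nbr x y}. (\<phi> x)^2))))"

text \<open>walkP L n x y: probability that simple random walk from x is at y at time n
  and has stayed in L at all times 0..n.\<close>
fun walkP :: "(int^'d) set \<Rightarrow> nat \<Rightarrow> int^'d \<Rightarrow> int^'d \<Rightarrow> real" where
  "walkP \<Lambda> 0 x y = (if x \<in> \<Lambda> \<and> x = y then 1 else 0)"
| "walkP \<Lambda> (Suc n) x y =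
     (if x \<in> \<Lambda> then (\<Sum>z\<in>{z\<in>\<Lambda>. nbr x z}. walkP \<Lambda> n z y) / real (2 * CARD('d)) else 0)"

text \<open>Green's function: expected number of visits to y before exiting L (times 0,1,2,...).\<close>
definition green :: "(int^'d) set \<Rightarrow> int^'d \<Rightarrow> int^'d \<Rightarrow> real" where
  "green \<Lambda> x y = (\<Sum>n. walkP \<Lambda> n x y)"

definition green_form :: "(int^'d) set \<Rightarrow> (int^'d \<Rightarrow> real) \<Rightarrow> real" where
  "green_form \<Lambda> \<xi> = (\<Sum>x\<in>\<Lambda>. \<Sum>y\<in>\<Lambda>. \<xi> x * green \<Lambda> x y * \<xi> y)"

end

theory Submission
  imports Defs "HOL-Probability.Distributions"
begin

text \<open>Writing \<open>\<phi> = \<psi>\<^sub>u + f\<close>, the quadratic bounds \<open>A s\<^sup>2 - B \<le> V s \<le> V 0 + C\<^sub>2 s\<^sup>2 / 2\<close>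
  (the upper one from \<open>V'' \<le> C\<^sub>2\<close> and evenness) sandwich the Hamiltonian between Gaussian
  energies: since the tilt \<open>\<psi>\<^sub>u\<close> is harmonic, the bond energy splits into the Dirichlet energy
  of \<open>f\<close> (zero outside \<open>\<Lambda>\<close>) plus a constant tilt energy, and the exponential tilt
  \<open>\<beta>/2\<close> times the gradient energy is exactly \<open>\<beta>\<close> times that Dirichlet energy, which lowers
  \<open>A\<close> to \<open>A - \<beta>\<close>. A Gaussian integral with the linear disorder term is computed by completing
  the square: the Green operator of the walk killed outside \<open>\<Lambda>\<close> inverts the Dirichlet form,
  so translating the field costs \<open>\<langle>\<xi>, G\<xi>\<rangle> / (16 c \<cdot> 2d)\<close> and leaves the partition
  function that defines \<open>\<sigma>\<^sup>c\<close>.\<close>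

definition nbhd :: "int^'d \<Rightarrow> (int^'d) set" where "nbhd x = {y. nbr x y}"
definition unit_steps :: "(int^'d) set" where "unit_steps = {v. (\<Sum>i\<in>UNIV. \<bar>v$i\<bar>) = 1}"

lemma nbr_sym: "nbr x y \<longleftrightarrow> nbr y x"
  unfolding nbr_def l1dist_def by (simp add: abs_minus_commute)

lemma nbr_iff_diff_unit_step: "nbr x y \<longleftrightarrow> y - x \<in> unit_steps"
  unfolding nbr_def l1dist_def unit_steps_def by (simp add: abs_minus_commute)

lemma unit_steps_eq_axis: "unit_steps = (\<lambda>(i,s). axis i s) ` (UNIV \<times> {1,-1::int})"
proof (intro set_eqI iffI)
  fix v :: "int^'d" assume v: "v \<in> unit_steps"
  hence s: "(\<Sum>i\<in>UNIV. \<bar>v$i\<bar>) = 1" by (simp add: unit_steps_def)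
  obtain i where i: "v$i \<noteq> 0"
  proof (rule ccontr)
    assume "\<not> thesis" with that have "\<forall>i. v$i = 0" by blast
    with s show False by simp
  qed
  have split: "(\<Sum>j\<in>UNIV. \<bar>v$j\<bar>) = \<bar>v$i\<bar> + (\<Sum>j\<in>UNIV-{i}. \<bar>v$j\<bar>)"
    by (simp add: sum.remove)
  have nn: "(\<Sum>j\<in>UNIV-{i}. \<bar>v$j\<bar>) \<ge> 0" by (simp add: sum_nonneg)
  have vi: "\<bar>v$i\<bar> = 1" using i s split nn by linarith
  hence rest: "(\<Sum>j\<in>UNIV-{i}. \<bar>v$j\<bar>) = 0" using s split by linarith
  hence "\<forall>j\<in>UNIV-{i}. \<bar>v$j\<bar> = 0" by (subst (asm) sum_nonneg_eq_0_iff) auto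
  hence "v = axis i (v$i)" by (auto simp: vec_eq_iff axis_def)
  moreover have "v$i \<in> {1,-1}" using vi by auto
  ultimately show "v \<in> (\<lambda>(i,s). axis i s) ` (UNIV \<times> {1,-1::int})" by force
next
  fix v :: "int^'d" assume "v \<in> (\<lambda>(i,s). axis i s) ` (UNIV \<times> {1,-1::int})"
  then obtain i s where v: "v = axis i s" "s \<in> {1,-1}" by auto
  have "(\<Sum>j\<in>UNIV. \<bar>v$j\<bar>) = (\<Sum>j\<in>UNIV. if j = i then 1 else 0)"
    using v by (intro sum.cong) (auto simp: axis_def)
  also have "\<dots> = 1" by simp
  finally show "v \<in> unit_steps" by (simp add: unit_steps_def)
qed

lemma inj_on_axis_signs: "inj_on (\<lambda>(i,s). axis i s :: int^'d) (UNIV \<times> {1,-1::int})"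
  by (auto simp: inj_on_def axis_eq_axis)

lemma card_unit_steps: "card (unit_steps :: (int^'d) set) = 2 * CARD('d)"
  unfolding unit_steps_eq_axis by (subst card_image[OF inj_on_axis_signs]) (simp add: card_cartesian_product)

lemma finite_unit_steps: "finite unit_steps"
  unfolding unit_steps_eq_axis by simp

lemma uminus_in_unit_steps: "v \<in> unit_steps \<Longrightarrow> - v \<in> unit_steps"
  by (simp add: unit_steps_def)

lemma nbhd_eq: "nbhd x = (\<lambda>v. x + v) ` unit_steps"
  unfolding nbhd_def nbr_iff_diff_unit_step by (auto simp: image_iff) (metis add.commute diff_add_cancel)

lemma finite_nbhd: "finite (nbhd x)"
  by (simp add: nbhd_eq finite_unit_steps)

lemma card_nbhd: "card (nbhd x :: (int^'d) set) = 2 * CARD('d)"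
  by (simp add: nbhd_eq card_image inj_on_def card_unit_steps)

lemma sum_nbhd: "(\<Sum>y\<in>nbhd x. f y) = (\<Sum>v\<in>unit_steps. f (x + v))"
  by (simp add: nbhd_eq sum.reindex inj_on_def)

lemma sum_unit_steps_odd:
  assumes "\<And>v. g (- v) = - g v" shows "(\<Sum>v\<in>unit_steps. g v) = (0::real)"
proof -
  have "(\<Sum>v\<in>unit_steps. g v) = (\<Sum>v\<in>uminus ` unit_steps. g v)"
  proof -
    have "uminus ` unit_steps = (unit_steps :: (int^'d) set)"
      by (auto simp: image_iff uminus_in_unit_steps) (metis uminus_in_unit_steps minus_minus)
    thus ?thesis by metis
  qed
  also have "\<dots> = (\<Sum>v\<in>unit_steps. g (- v))" by (simp add: sum.reindex inj_on_def)
  also have "\<dots> = - (\<Sum>v\<in>unit_steps. g v)" by (simp add: assms sum_negf)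
  finally show ?thesis by simp
qed

lemma zdot_add: "zdot (x + y) u = zdot x u + zdot y u"
  by (simp add: zdot_def distrib_right sum.distrib)
lemma zdot_minus: "zdot (- x) u = - zdot x u"
  by (simp add: zdot_def sum_negf)
lemma zdot_diff: "zdot (x - y) u = zdot x u - zdot y u"
  by (metis diff_conv_add_uminus zdot_add zdot_minus)

lemma nbhd_split_bdry: "x \<in> \<Lambda> \<Longrightarrow> nbhd x = (\<Lambda> \<inter> nbhd x) \<union> (bdry \<Lambda> \<inter> nbhd x)"
  by (auto simp: nbhd_def bdry_def nbr_sym)

lemma card_nbhd_split: 
  fixes x :: "int^'d"
  assumes "x \<in> \<Lambda>" shows "real (card (\<Lambda> \<inter> nbhd x)) + real (card (bdry \<Lambda> \<inter> nbhd x)) = 2 * real CARD('d)"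
proof -
  have "card (nbhd x) = card (\<Lambda> \<inter> nbhd x) + card (bdry \<Lambda> \<inter> nbhd x)"
    by (subst nbhd_split_bdry[OF assms], rule card_Un_disjoint) (auto simp: finite_nbhd bdry_def)
  thus ?thesis using card_nbhd[of x] by simp
qed

lemma sum_nbhd_split:
  assumes "x \<in> \<Lambda>" shows "(\<Sum>y\<in>nbhd x. f y) = (\<Sum>y\<in>\<Lambda> \<inter> nbhd x. f y) + (\<Sum>y\<in>bdry \<Lambda> \<inter> nbhd x. f y)"
  by (subst nbhd_split_bdry[OF assms], rule sum.union_disjoint) (auto simp: finite_nbhd bdry_def)

lemma finite_bdry: "finite \<Lambda> \<Longrightarrow> finite (bdry \<Lambda>)"
proof -
  assume f: "finite \<Lambda>"
  have "bdry \<Lambda> \<subseteq> (\<Union>x\<in>\<Lambda>. nbhd x)" by (auto simp: bdry_def nbhd_def nbr_sym)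
  thus ?thesis using f finite_nbhd by (meson finite_UN_I finite_subset)
qed

lemma finite_nbrs_in: "finite {z\<in>\<Lambda>. nbr x z}"
  by (rule finite_subset[OF _ finite_nbhd[of x]]) (auto simp: nbhd_def)

lemma nbrs_in_eq: "{z\<in>\<Lambda>. nbr x z} = \<Lambda> \<inter> nbhd x"
  by (auto simp: nbhd_def)

lemma walkP_nonneg: "walkP \<Lambda> n x y \<ge> 0"
  by (induction n arbitrary: x) (auto intro!: sum_nonneg divide_nonneg_pos)

lemma walkP_outside_right: "y \<notin> \<Lambda> \<Longrightarrow> walkP \<Lambda> n x y = 0"
  by (induction n arbitrary: x) auto

lemma walkP_outside_left: "x \<notin> \<Lambda> \<Longrightarrow> walkP \<Lambda> n x y = 0"
  by (cases n) auto

lemma walkP_Suc_right: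
  "walkP \<Lambda> (Suc n) x (y::int^'d) = (if y \<in> \<Lambda> then (\<Sum>z\<in>{z\<in>\<Lambda>. nbr y z}. walkP \<Lambda> n x z) / real (2 * CARD('d)) else 0)"
proof (induction n arbitrary: x)
  case 0
  have "(\<Sum>z\<in>{z\<in>\<Lambda>. nbr x z}. (if z \<in> \<Lambda> \<and> z = y then 1 else 0::real)) = (if y \<in> \<Lambda> \<and> nbr x y then 1 else 0)"
    using finite_nbrs_in[of \<Lambda> x] by (simp add: sum.delta' conj_commute)
  moreover have "(\<Sum>z\<in>{z\<in>\<Lambda>. nbr y z}. (if x \<in> \<Lambda> \<and> x = z then 1 else 0::real)) = (if x \<in> \<Lambda> \<and> nbr y x then 1 else 0)"
    using finite_nbrs_in[of \<Lambda> y] by (cases "x \<in> \<Lambda>") (simp_all add: sum.delta)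
  ultimately show ?case by (auto simp: nbr_sym)
next
  case (Suc n)
  have "walkP \<Lambda> (Suc (Suc n)) x y = (if x \<in> \<Lambda> then (\<Sum>z\<in>{z\<in>\<Lambda>. nbr x z}. walkP \<Lambda> (Suc n) z y) / real (2 * CARD('d)) else 0)"
    by simp
  also have "\<dots> = (if x \<in> \<Lambda> then (\<Sum>z\<in>{z\<in>\<Lambda>. nbr x z}. (if y \<in> \<Lambda> then (\<Sum>w\<in>{w\<in>\<Lambda>. nbr y w}. walkP \<Lambda> n z w) / real (2 * CARD('d)) else 0)) / real (2 * CARD('d)) else 0)"
    by (simp only: Suc)
  also have "\<dots> = (if y \<in> \<Lambda> then (\<Sum>w\<in>{w\<in>\<Lambda>. nbr y w}. (if x \<in> \<Lambda> then (\<Sum>z\<in>{z\<in>\<Lambda>. nbr x z}. walkP \<Lambda> n z w) / real (2 * CARD('d)) else 0)) / real (2 * CARD('d)) else 0)"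
    by (auto simp: sum_divide_distrib[symmetric] intro: sum.swap)
  also have "\<dots> = (if y \<in> \<Lambda> then (\<Sum>w\<in>{w\<in>\<Lambda>. nbr y w}. walkP \<Lambda> (Suc n) x w) / real (2 * CARD('d)) else 0)"
    by simp
  finally show ?case .
qed

lemma walkP_sym: "walkP \<Lambda> n x y = walkP \<Lambda> n y (x::int^'d)"
proof (induction n arbitrary: x y)
  case 0 thus ?case by auto
next
  case (Suc n)
  have "walkP \<Lambda> (Suc n) x y = (if x\<in>\<Lambda> then (\<Sum>z\<in>{z\<in>\<Lambda>. nbr x z}. walkP \<Lambda> n y z)/real(2*CARD('d)) else 0)"
    by (simp add: Suc)
  also have "\<dots> = walkP \<Lambda> (Suc n) y x" by (rule walkP_Suc_right[symmetric])
  finally show ?case .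
qed

text \<open>The square of a coordinate is strictly subharmonic, so this function (nonnegative on
  \<Lambda> and its neighbours) drops on average along the walk; this bounds the expected exit time.
  Any coordinate works; \<open>undefined\<close> merely names one.\<close>
definition lyapunov :: "(int^'d) set \<Rightarrow> int^'d \<Rightarrow> real" where
  "lyapunov \<Lambda> y = (\<Sum>x\<in>\<Lambda>. real_of_int \<bar>x$(undefined::'d)\<bar> + 1)^2 - (real_of_int (y$(undefined::'d)))^2"

lemma lyapunov_nonneg:
  assumes fin: "finite \<Lambda>" and x: "x \<in> \<Lambda>" and z: "z = x \<or> nbr x z"
  shows "lyapunov \<Lambda> z \<ge> 0"
proof -
  let ?k = "undefined::'d"
  have "\<bar>z$?k - x$?k\<bar> \<le> 1"
  proof (cases "z = x")
    case False
    with z have "l1dist x z = 1" by (simp add: nbr_def)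
    moreover have "\<bar>x$?k - z$?k\<bar> \<le> l1dist x z" unfolding l1dist_def
      by (rule member_le_sum) auto
    ultimately show ?thesis by (simp add: abs_minus_commute)
  qed simp
  hence a: "real_of_int \<bar>z$?k\<bar> \<le> real_of_int \<bar>x$?k\<bar> + 1" by linarith
  have b: "real_of_int \<bar>x$?k\<bar> + 1 \<le> (\<Sum>x\<in>\<Lambda>. real_of_int \<bar>x$?k\<bar> + 1)"
    by (rule member_le_sum[OF x _ fin]) simp
  have "(real_of_int (z$?k))^2 = (real_of_int \<bar>z$?k\<bar>)^2" by simp
  also have "\<dots> \<le> (\<Sum>x\<in>\<Lambda>. real_of_int \<bar>x$?k\<bar> + 1)^2"
    by (rule power_mono) (use a b in auto)
  finally show ?thesis by (simp add: lyapunov_def)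
qed

lemma sum_nbhd_lyapunov_le:
  "(\<Sum>z\<in>nbhd x. lyapunov \<Lambda> z) \<le> real (2 * CARD('d)) * lyapunov \<Lambda> (x::int^'d) - 1"
proof -
  let ?k = "undefined::'d"
  have "(\<Sum>z\<in>nbhd x. lyapunov \<Lambda> z) = (\<Sum>v\<in>unit_steps. lyapunov \<Lambda> (x + v))" by (rule sum_nbhd)
  also have "\<dots> = (\<Sum>v\<in>unit_steps. lyapunov \<Lambda> x - 2 * real_of_int (x$?k) * real_of_int (v$?k) - (real_of_int (v$?k))^2)"
    by (intro sum.cong) (auto simp: lyapunov_def power2_eq_square algebra_simps)
  also have "\<dots> = real (card (unit_steps::(int^'d) set)) * lyapunov \<Lambda> x - 2 * real_of_int (x$?k) * (\<Sum>v\<in>unit_steps. real_of_int (v$?k)) - (\<Sum>v\<in>unit_steps. (real_of_int (v$?k))^2)"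
    by (simp add: sum_subtractf sum_distrib_left)
  also have "(\<Sum>v\<in>unit_steps. real_of_int ((v::int^'d)$?k)) = 0"
    by (rule sum_unit_steps_odd) simp
  also have "(\<Sum>v\<in>unit_steps. (real_of_int ((v::int^'d)$?k))^2) \<ge> (real_of_int ((axis ?k 1::int^'d)$?k))^2"
    by (rule member_le_sum) (auto simp: finite_unit_steps unit_steps_eq_axis)
  hence "(\<Sum>v\<in>unit_steps. (real_of_int ((v::int^'d)$?k))^2) \<ge> 1" by simp
  ultimately show ?thesis by (simp add: card_unit_steps)
qed

definition survival :: "(int^'d) set \<Rightarrow> nat \<Rightarrow> int^'d \<Rightarrow> real" where
  "survival \<Lambda> m x = (\<Sum>y\<in>\<Lambda>. walkP \<Lambda> m x y)"

lemma survival_sum_lyapunov_le: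
  assumes fin: "finite \<Lambda>" and x: "x \<in> \<Lambda>"
  shows "(\<Sum>m<n. survival \<Lambda> m x) + (\<Sum>y\<in>\<Lambda>. walkP \<Lambda> n x y * lyapunov \<Lambda> y) \<le> real (2 * CARD('d)) * lyapunov \<Lambda> (x::int^'d)"
  using x
proof (induction n arbitrary: x)
  case 0
  have "(\<Sum>y\<in>\<Lambda>. walkP \<Lambda> 0 x y * lyapunov \<Lambda> y) = (\<Sum>y\<in>\<Lambda>. if x = y then lyapunov \<Lambda> y else 0)"
    by (rule sum.cong) (use 0 in auto)
  also have "\<dots> = lyapunov \<Lambda> x" using 0 fin by (simp add: sum.delta)
  finally have "(\<Sum>y\<in>\<Lambda>. walkP \<Lambda> 0 x y * lyapunov \<Lambda> y) = lyapunov \<Lambda> x" .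
  moreover have "lyapunov \<Lambda> x \<ge> 0" using lyapunov_nonneg[OF fin 0] by simp
  moreover have "1 \<le> real (2*CARD('d))"
  proof -
    have "CARD('d) > 0" by (simp add: card_gt_0_iff)
    thus ?thesis by linarith
  qed
  ultimately show ?case using mult_right_mono[of 1 "real (2*CARD('d))" "lyapunov \<Lambda> x"] by simp
next
  case (Suc n)
  let ?d = "real (2 * CARD('d))"
  let ?N = "{z\<in>\<Lambda>. nbr x z}"
  have s0: "survival \<Lambda> 0 x = 1" using Suc.prems fin by (simp add: survival_def if_distrib sum.delta cong: if_cong)
  have sS: "survival \<Lambda> (Suc m) x = (\<Sum>z\<in>?N. survival \<Lambda> m z) / ?d" for m
    using Suc.prems by (simp add: survival_def sum_divide_distrib[symmetric] sum.swap[of _ \<Lambda>])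
  have wS: "(\<Sum>y\<in>\<Lambda>. walkP \<Lambda> (Suc n) x y * lyapunov \<Lambda> y) = (\<Sum>z\<in>?N. \<Sum>y\<in>\<Lambda>. walkP \<Lambda> n z y * lyapunov \<Lambda> y) / ?d"
    using Suc.prems by (simp add: sum_divide_distrib[symmetric] sum_distrib_right sum.swap[of _ \<Lambda>])
  have "(\<Sum>m<Suc n. survival \<Lambda> m x) = 1 + (\<Sum>m<n. survival \<Lambda> (Suc m) x)"
    by (subst sum.lessThan_Suc_shift) (simp add: s0)
  also have "(\<Sum>m<n. survival \<Lambda> (Suc m) x) = (\<Sum>z\<in>?N. \<Sum>m<n. survival \<Lambda> m z) / ?d"
    by (simp add: sS sum_divide_distrib[symmetric] sum.swap[of _ "{..<n}"])
  finally have e1: "(\<Sum>m<Suc n. survival \<Lambda> m x) = 1 + (\<Sum>z\<in>?N. \<Sum>m<n. survival \<Lambda> m z) / ?d" .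
  have "(\<Sum>m<Suc n. survival \<Lambda> m x) + (\<Sum>y\<in>\<Lambda>. walkP \<Lambda> (Suc n) x y * lyapunov \<Lambda> y)
      = 1 + (\<Sum>z\<in>?N. (\<Sum>m<n. survival \<Lambda> m z) + (\<Sum>y\<in>\<Lambda>. walkP \<Lambda> n z y * lyapunov \<Lambda> y)) / ?d"
    unfolding e1 wS by (simp only: sum.distrib add_divide_distrib add.assoc)
  also have "\<dots> \<le> 1 + (\<Sum>z\<in>?N. ?d * lyapunov \<Lambda> z) / ?d"
    by (intro add_left_mono divide_right_mono sum_mono Suc.IH) auto
  also have "\<dots> = 1 + (\<Sum>z\<in>?N. lyapunov \<Lambda> z)"
    by (simp add: sum_distrib_left[symmetric])
  also have "(\<Sum>z\<in>?N. lyapunov \<Lambda> z) \<le> (\<Sum>z\<in>nbhd x. lyapunov \<Lambda> z)"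
    by (rule sum_mono2[OF finite_nbhd]) (auto simp: nbhd_def intro!: lyapunov_nonneg[OF fin Suc.prems])
  also have "\<dots> \<le> ?d * lyapunov \<Lambda> x - 1" by (rule sum_nbhd_lyapunov_le)
  finally show ?case by simp
qed

lemma sum_walkP_le:
  assumes fin: "finite \<Lambda>"
  shows "(\<Sum>m<n. walkP \<Lambda> m x y) \<le> (if x \<in> \<Lambda> then real (2 * CARD('d)) * lyapunov \<Lambda> (x::int^'d) else 0)"
proof (cases "x \<in> \<Lambda> \<and> y \<in> \<Lambda>")
  case True
  have "(\<Sum>m<n. walkP \<Lambda> m x y) \<le> (\<Sum>m<n. survival \<Lambda> m x)"
    unfolding survival_def by (intro sum_mono member_le_sum) (use True fin in \<open>auto simp: walkP_nonneg\<close>)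
  also have "\<dots> \<le> real (2 * CARD('d)) * lyapunov \<Lambda> x"
  proof -
    have "(\<Sum>y\<in>\<Lambda>. walkP \<Lambda> n x y * lyapunov \<Lambda> y) \<ge> 0"
      by (intro sum_nonneg mult_nonneg_nonneg walkP_nonneg lyapunov_nonneg[OF fin]) auto
    thus ?thesis using survival_sum_lyapunov_le[OF fin, of x n] True by linarith
  qed
  finally show ?thesis using True by simp
next
  case False
  hence "(\<Sum>m<n. walkP \<Lambda> m x y) = 0" by (auto simp: walkP_outside_right walkP_outside_left)
  moreover have "x \<in> \<Lambda> \<Longrightarrow> lyapunov \<Lambda> x \<ge> 0" using lyapunov_nonneg[OF fin] by blast
  ultimately show ?thesis by simp
qed

lemma summable_walkP: "finite \<Lambda> \<Longrightarrow> summable (\<lambda>n. walkP \<Lambda> n x y)"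
  by (rule summableI_nonneg_bounded[OF walkP_nonneg sum_walkP_le])

lemma green_nonneg: "finite \<Lambda> \<Longrightarrow> green \<Lambda> x y \<ge> 0"
  unfolding green_def by (simp add: suminf_nonneg summable_walkP walkP_nonneg)

lemma green_sym: "green \<Lambda> x y = green \<Lambda> y x"
  unfolding green_def by (simp add: walkP_sym)

lemma green_row_sum_le:
  assumes fin: "finite \<Lambda>" and x: "x \<in> \<Lambda>"
  shows "(\<Sum>y\<in>\<Lambda>. green \<Lambda> x y) \<le> real (2 * CARD('d)) * lyapunov \<Lambda> (x::int^'d)"
proof -
  have "(\<Sum>y\<in>\<Lambda>. green \<Lambda> x y) = (\<Sum>n. survival \<Lambda> n x)"
    unfolding green_def survival_def by (rule suminf_sum[symmetric]) (simp add: summable_walkP fin)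
  also have "\<dots> \<le> real (2 * CARD('d)) * lyapunov \<Lambda> x"
  proof (rule suminf_le_const)
    show "summable (\<lambda>n. survival \<Lambda> n x)" unfolding survival_def
      by (rule summable_sum) (simp add: summable_walkP fin)
    fix n
    have "(\<Sum>y\<in>\<Lambda>. walkP \<Lambda> n x y * lyapunov \<Lambda> y) \<ge> 0"
      by (intro sum_nonneg mult_nonneg_nonneg walkP_nonneg lyapunov_nonneg[OF fin]) auto
    thus "sum (\<lambda>n. survival \<Lambda> n x) {..<n} \<le> real (2 * CARD('d)) * lyapunov \<Lambda> x"
      using survival_sum_lyapunov_le[OF fin x, of n] by linarith
  qed
  finally show ?thesis .
qed

lemma green_unfold:
  fixes x :: "int^'d"
  assumes fin: "finite \<Lambda>" and x: "x \<in> \<Lambda>"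
  shows "green \<Lambda> x y = (if x = y then 1 else 0) + (\<Sum>z\<in>\<Lambda> \<inter> nbhd x. green \<Lambda> z y) / real (2 * CARD('d))"
proof -
  have "green \<Lambda> x y = walkP \<Lambda> 0 x y + (\<Sum>n. walkP \<Lambda> (Suc n) x y)"
    unfolding green_def using suminf_split_head[OF summable_walkP[OF fin], of x y] by simp
  also have "(\<Sum>n. walkP \<Lambda> (Suc n) x y) = (\<Sum>n. (\<Sum>z\<in>\<Lambda> \<inter> nbhd x. walkP \<Lambda> n z y) / real (2 * CARD('d)))"
    using x by (simp add: nbrs_in_eq)
  also have "\<dots> = (\<Sum>n. (\<Sum>z\<in>\<Lambda> \<inter> nbhd x. walkP \<Lambda> n z y)) / real (2 * CARD('d))"
    by (rule suminf_divide) (auto intro!: summable_sum simp: summable_walkP fin)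
  also have "(\<Sum>n. (\<Sum>z\<in>\<Lambda> \<inter> nbhd x. walkP \<Lambda> n z y)) = (\<Sum>z\<in>\<Lambda> \<inter> nbhd x. green \<Lambda> z y)"
    unfolding green_def by (rule suminf_sum) (simp add: summable_walkP fin)
  finally show ?thesis using x by simp
qed

definition bdry_pairs :: "(int^'d) set \<Rightarrow> ((int^'d) \<times> (int^'d)) set" where
  "bdry_pairs \<Lambda> = {(x,y). x \<in> \<Lambda> \<and> y \<in> bdry \<Lambda> \<and> nbr x y}"

definition dirichlet_form :: "(int^'d) set \<Rightarrow> (int^'d \<Rightarrow> real) \<Rightarrow> (int^'d \<Rightarrow> real) \<Rightarrow> real" where
  "dirichlet_form \<Lambda> f g = 1/2 * (\<Sum>(x,y)\<in>nnpairs \<Lambda>. (f x - f y) * (g x - g y)) + (\<Sum>(x,y)\<in>bdry_pairs \<Lambda>. f x * g x)"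

definition dirichlet_energy :: "(int^'d) set \<Rightarrow> (int^'d \<Rightarrow> real) \<Rightarrow> real" where
  "dirichlet_energy \<Lambda> f = dirichlet_form \<Lambda> f f"

definition inner_on :: "(int^'d) set \<Rightarrow> (int^'d \<Rightarrow> real) \<Rightarrow> (int^'d \<Rightarrow> real) \<Rightarrow> real" where
  "inner_on \<Lambda> f g = (\<Sum>x\<in>\<Lambda>. f x * g x)"

definition green_op :: "(int^'d) set \<Rightarrow> (int^'d \<Rightarrow> real) \<Rightarrow> int^'d \<Rightarrow> real" where
  "green_op \<Lambda> \<xi> x = (\<Sum>y\<in>\<Lambda>. green \<Lambda> x y * \<xi> y)"

lemma nnpairs_Sigma: "nnpairs \<Lambda> = Sigma \<Lambda> (\<lambda>x. \<Lambda> \<inter> nbhd x)"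
  by (auto simp: nnpairs_def nbhd_def)
lemma bdry_pairs_Sigma: "bdry_pairs \<Lambda> = Sigma \<Lambda> (\<lambda>x. bdry \<Lambda> \<inter> nbhd x)"
  by (auto simp: bdry_pairs_def nbhd_def)

lemma finite_nnpairs: "finite \<Lambda> \<Longrightarrow> finite (nnpairs \<Lambda>)"
  unfolding nnpairs_Sigma by (auto intro!: finite_SigmaI simp: finite_nbhd)
lemma finite_bdry_pairs: "finite \<Lambda> \<Longrightarrow> finite (bdry_pairs \<Lambda>)"
  unfolding bdry_pairs_Sigma by (auto intro!: finite_SigmaI simp: finite_nbhd)

lemma sum_nnpairs: "finite \<Lambda> \<Longrightarrow> (\<Sum>(x,y)\<in>nnpairs \<Lambda>. F x y) = (\<Sum>x\<in>\<Lambda>. \<Sum>y\<in>\<Lambda> \<inter> nbhd x. F x y)"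
  unfolding nnpairs_Sigma by (rule sum.Sigma[symmetric]) (auto simp: finite_nbhd)
lemma sum_bdry_pairs: "finite \<Lambda> \<Longrightarrow> (\<Sum>(x,y)\<in>bdry_pairs \<Lambda>. F x y) = (\<Sum>x\<in>\<Lambda>. \<Sum>y\<in>bdry \<Lambda> \<inter> nbhd x. F x y)"
  unfolding bdry_pairs_Sigma by (rule sum.Sigma[symmetric]) (auto simp: finite_nbhd)

lemma sum_nnpairs_swap: "(\<Sum>(x,y)\<in>nnpairs \<Lambda>. F x y) = (\<Sum>(x,y)\<in>nnpairs \<Lambda>. F y x)"
proof -
  have "prod.swap ` nnpairs \<Lambda> = nnpairs \<Lambda>"
    by (auto simp: nnpairs_def nbr_sym image_iff)
  hence "(\<Sum>(x,y)\<in>nnpairs \<Lambda>. F x y) = (\<Sum>(x,y)\<in>prod.swap ` nnpairs \<Lambda>. F x y)" by simp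
  also have "\<dots> = (\<Sum>(x,y)\<in>nnpairs \<Lambda>. F y x)"
    by (subst sum.reindex) (auto simp: comp_def case_prod_beta)
  finally show ?thesis .
qed

lemma sum_nnpairs_by_parts:
  fixes f g :: "int^'d \<Rightarrow> real"
  assumes fin: "finite \<Lambda>"
  shows "1/2 * (\<Sum>(x,y)\<in>nnpairs \<Lambda>. (f x - f y) * (g x - g y)) = (\<Sum>x\<in>\<Lambda>. f x * (\<Sum>y\<in>\<Lambda> \<inter> nbhd x. g x - g y))"
proof -
  have "(\<Sum>(x,y)\<in>nnpairs \<Lambda>. (f x - f y) * (g x - g y)) = (\<Sum>(x,y)\<in>nnpairs \<Lambda>. f x * (g x - g y)) + (\<Sum>(x,y)\<in>nnpairs \<Lambda>. f y * (g y - g x))"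
    unfolding sum.distrib[symmetric] by (intro sum.cong) (auto simp: right_diff_distrib left_diff_distrib)
  also have "(\<Sum>(x,y)\<in>nnpairs \<Lambda>. f y * (g y - g x)) = (\<Sum>(x,y)\<in>nnpairs \<Lambda>. f x * (g x - g y))"
    by (rule sum_nnpairs_swap)
  finally have "1/2 * (\<Sum>(x,y)\<in>nnpairs \<Lambda>. (f x - f y) * (g x - g y)) = (\<Sum>(x,y)\<in>nnpairs \<Lambda>. f x * (g x - g y))" by simp
  also have "\<dots> = (\<Sum>x\<in>\<Lambda>. f x * (\<Sum>y\<in>\<Lambda> \<inter> nbhd x. g x - g y))"
    using fin by (simp add: sum_nnpairs sum_distrib_left)
  finally show ?thesis .
qed

lemma dirichlet_form_cong: "(\<And>x. x \<in> \<Lambda> \<Longrightarrow> f x = f' x) \<Longrightarrow> (\<And>x. x \<in> \<Lambda> \<Longrightarrow> g x = g' x) \<Longrightarrow> dirichlet_form \<Lambda> f g = dirichlet_form \<Lambda> f' g'"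
  unfolding dirichlet_form_def by (intro arg_cong2[where f="(+)"] arg_cong[where f="\<lambda>t. 1/2 * t"] sum.cong)
    (auto simp: nnpairs_def bdry_pairs_def)

lemma dirichlet_energy_cong: "(\<And>x. x \<in> \<Lambda> \<Longrightarrow> f x = f' x) \<Longrightarrow> dirichlet_energy \<Lambda> f = dirichlet_energy \<Lambda> f'"
  unfolding dirichlet_energy_def by (rule dirichlet_form_cong)

lemma dirichlet_form_commute: "dirichlet_form \<Lambda> f g = dirichlet_form \<Lambda> g f"
  unfolding dirichlet_form_def by (simp add: mult.commute)

lemma dirichlet_energy_lincomb: "dirichlet_energy \<Lambda> (\<lambda>x. a * f x + b * g x) = a^2 * dirichlet_energy \<Lambda> f + 2*a*b * dirichlet_form \<Lambda> f g + b^2 * dirichlet_energy \<Lambda> g"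
proof -
  have e1: "(\<Sum>(x,y)\<in>S. ((a*f x + b*g x) - (a*f y + b*g y)) * ((a*f x + b*g x) - (a*f y + b*g y)))
     = a^2 * (\<Sum>(x,y)\<in>S. (f x - f y)*(f x - f y)) + 2*a*b*(\<Sum>(x,y)\<in>S. (f x - f y)*(g x - g y)) + b^2*(\<Sum>(x,y)\<in>S. (g x - g y)*(g x - g y))" for S
    unfolding sum_distrib_left sum.distrib[symmetric] by (intro sum.cong) (auto simp: algebra_simps power2_eq_square)
  have e2: "(\<Sum>(x,y)\<in>S. (a*f x + b*g x) * (a*f x + b*g x))
     = a^2 * (\<Sum>(x,y)\<in>S. f x * f x) + 2*a*b*(\<Sum>(x,y)\<in>S. f x * g x) + b^2*(\<Sum>(x,y)\<in>S. g x * g x)" for S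
    unfolding sum_distrib_left sum.distrib[symmetric] by (intro sum.cong) (auto simp: algebra_simps power2_eq_square)
  show ?thesis unfolding dirichlet_energy_def dirichlet_form_def e1 e2 by (simp add: algebra_simps)
qed

lemma dirichlet_energy_nonneg: "dirichlet_energy \<Lambda> f \<ge> 0"
  unfolding dirichlet_energy_def dirichlet_form_def by (intro add_nonneg_nonneg mult_nonneg_nonneg sum_nonneg) auto

lemma dirichlet_energy_expand: "dirichlet_energy \<Lambda> f = 1/2 * (\<Sum>(x,y)\<in>nnpairs \<Lambda>. (f x - f y)^2) + (\<Sum>(x,y)\<in>bdry_pairs \<Lambda>. (f x)^2)"
  unfolding dirichlet_energy_def dirichlet_form_def by (simp add: power2_eq_square)

lemma green_op_unfold:
  fixes x :: "int^'d"
  assumes fin: "finite \<Lambda>" and x: "x \<in> \<Lambda>"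
  shows "green_op \<Lambda> \<xi> x = \<xi> x + (\<Sum>z\<in>\<Lambda> \<inter> nbhd x. green_op \<Lambda> \<xi> z) / real (2 * CARD('d))"
proof -
  have "green_op \<Lambda> \<xi> x = (\<Sum>y\<in>\<Lambda>. (if x = y then \<xi> y else 0) + (\<Sum>z\<in>\<Lambda> \<inter> nbhd x. green \<Lambda> z y * \<xi> y) / real (2 * CARD('d)))"
    unfolding green_op_def by (intro sum.cong refl) (simp add: green_unfold[OF fin x] distrib_right sum_distrib_right)
  also have "\<dots> = \<xi> x + (\<Sum>y\<in>\<Lambda>. \<Sum>z\<in>\<Lambda> \<inter> nbhd x. green \<Lambda> z y * \<xi> y) / real (2 * CARD('d))"
    using x fin by (simp add: sum.distrib sum.delta sum_divide_distrib[symmetric])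
  also have "(\<Sum>y\<in>\<Lambda>. \<Sum>z\<in>\<Lambda> \<inter> nbhd x. green \<Lambda> z y * \<xi> y) = (\<Sum>z\<in>\<Lambda> \<inter> nbhd x. green_op \<Lambda> \<xi> z)"
    unfolding green_op_def by (rule sum.swap)
  finally show ?thesis .
qed

lemma dirichlet_form_green_op:
  fixes \<phi> :: "int^'d \<Rightarrow> real"
  assumes fin: "finite \<Lambda>"
  shows "dirichlet_form \<Lambda> (green_op \<Lambda> \<xi>) \<phi> = real (2 * CARD('d)) * inner_on \<Lambda> \<xi> \<phi>"
proof -
  let ?g = "green_op \<Lambda> \<xi>" let ?d = "real (2 * CARD('d))"
  have "dirichlet_form \<Lambda> ?g \<phi> = 1/2 * (\<Sum>(x,y)\<in>nnpairs \<Lambda>. (\<phi> x - \<phi> y) * (?g x - ?g y)) + (\<Sum>(x,y)\<in>bdry_pairs \<Lambda>. \<phi> x * ?g x)"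
    unfolding dirichlet_form_def by (simp add: mult.commute)
  also have "\<dots> = (\<Sum>x\<in>\<Lambda>. \<phi> x * (\<Sum>y\<in>\<Lambda> \<inter> nbhd x. ?g x - ?g y)) + (\<Sum>x\<in>\<Lambda>. \<phi> x * (real (card (bdry \<Lambda> \<inter> nbhd x)) * ?g x))"
    unfolding sum_nnpairs_by_parts[OF fin] sum_bdry_pairs[OF fin] by (simp add: sum_distrib_left ac_simps)
  also have "\<dots> = (\<Sum>x\<in>\<Lambda>. \<phi> x * (?d * \<xi> x))"
    unfolding sum.distrib[symmetric]
  proof (intro sum.cong refl)
    fix x assume x: "x \<in> \<Lambda>"
    have "(\<Sum>y\<in>\<Lambda> \<inter> nbhd x. ?g x - ?g y) + real (card (bdry \<Lambda> \<inter> nbhd x)) * ?g x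
        = (real (card (\<Lambda> \<inter> nbhd x)) + real (card (bdry \<Lambda> \<inter> nbhd x))) * ?g x - (\<Sum>y\<in>\<Lambda> \<inter> nbhd x. ?g y)"
      by (simp add: sum_subtractf algebra_simps)
    also have "\<dots> = ?d * ?g x - (\<Sum>y\<in>\<Lambda> \<inter> nbhd x. ?g y)"
      using card_nbhd_split[OF x] by simp
    also have "\<dots> = ?d * \<xi> x"
      using green_op_unfold[OF fin x, of \<xi>] by (simp add: field_simps)
    finally show "\<phi> x * (\<Sum>y\<in>\<Lambda> \<inter> nbhd x. ?g x - ?g y) + \<phi> x * (real (card (bdry \<Lambda> \<inter> nbhd x)) * ?g x) = \<phi> x * (?d * \<xi> x)"
      by (simp add: distrib_left[symmetric])
  qed
  also have "\<dots> = ?d * inner_on \<Lambda> \<xi> \<phi>"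
    by (simp add: inner_on_def sum_distrib_left algebra_simps)
  finally show ?thesis .
qed

lemma tilt_cross_terms_eq_0:
  fixes f :: "int^'d \<Rightarrow> real"
  assumes fin: "finite \<Lambda>"
  shows "1/2 * (\<Sum>(x,y)\<in>nnpairs \<Lambda>. (f x - f y) * (tilt u x - tilt u y)) + (\<Sum>(x,y)\<in>bdry_pairs \<Lambda>. f x * (tilt u x - tilt u y)) = 0"
proof -
  have "1/2 * (\<Sum>(x,y)\<in>nnpairs \<Lambda>. (f x - f y) * (tilt u x - tilt u y)) + (\<Sum>(x,y)\<in>bdry_pairs \<Lambda>. f x * (tilt u x - tilt u y))
     = (\<Sum>x\<in>\<Lambda>. f x * ((\<Sum>y\<in>\<Lambda> \<inter> nbhd x. tilt u x - tilt u y) + (\<Sum>y\<in>bdry \<Lambda> \<inter> nbhd x. tilt u x - tilt u y)))"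
    unfolding sum_nnpairs_by_parts[OF fin] sum_bdry_pairs[OF fin] by (simp add: sum_distrib_left distrib_left sum.distrib)
  also have "\<dots> = (\<Sum>x\<in>\<Lambda>. f x * 0)"
  proof (intro sum.cong refl arg_cong[where f="\<lambda>t. f _ * t"])
    fix x assume x: "x \<in> \<Lambda>"
    have "(\<Sum>y\<in>\<Lambda> \<inter> nbhd x. tilt u x - tilt u y) + (\<Sum>y\<in>bdry \<Lambda> \<inter> nbhd x. tilt u x - tilt u y)
        = (\<Sum>y\<in>nbhd x. tilt u x - tilt u y)" by (rule sum_nbhd_split[OF x, symmetric])
    also have "\<dots> = (\<Sum>v\<in>unit_steps. - zdot v u)"
      by (simp add: sum_nbhd tilt_def zdot_add)
    also have "\<dots> = 0" by (rule sum_unit_steps_odd) (simp add: zdot_minus)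
    finally show "(\<Sum>y\<in>\<Lambda> \<inter> nbhd x. tilt u x - tilt u y) + (\<Sum>y\<in>bdry \<Lambda> \<inter> nbhd x. tilt u x - tilt u y) = 0" .
  qed
  finally show ?thesis by simp
qed

lemma inner_on_green_op_le:
  fixes \<phi> :: "int^'d \<Rightarrow> real"
  assumes fin: "finite \<Lambda>"
  shows "inner_on \<Lambda> \<phi> (green_op \<Lambda> \<phi>) \<le> (\<Sum>x\<in>\<Lambda>. real (2 * CARD('d)) * lyapunov \<Lambda> x) * inner_on \<Lambda> \<phi> \<phi>"
proof -
  let ?K = "\<Sum>x\<in>\<Lambda>. real (2 * CARD('d)) * lyapunov \<Lambda> x"
  have Kx: "(\<Sum>y\<in>\<Lambda>. green \<Lambda> x y) \<le> ?K" if x: "x \<in> \<Lambda>" for x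
  proof -
    have "(\<Sum>y\<in>\<Lambda>. green \<Lambda> x y) \<le> real (2 * CARD('d)) * lyapunov \<Lambda> x" by (rule green_row_sum_le[OF fin x])
    also have "\<dots> \<le> ?K"
      by (rule member_le_sum[OF x _ fin]) (auto intro!: mult_nonneg_nonneg lyapunov_nonneg[OF fin])
    finally show ?thesis .
  qed
  have "inner_on \<Lambda> \<phi> (green_op \<Lambda> \<phi>) = (\<Sum>x\<in>\<Lambda>. \<Sum>y\<in>\<Lambda>. green \<Lambda> x y * (\<phi> x * \<phi> y))"
    by (simp add: inner_on_def green_op_def sum_distrib_left algebra_simps)
  also have "\<dots> \<le> (\<Sum>x\<in>\<Lambda>. \<Sum>y\<in>\<Lambda>. green \<Lambda> x y * ((\<phi> x)^2 / 2 + (\<phi> y)^2 / 2))"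
  proof (intro sum_mono mult_left_mono green_nonneg[OF fin])
    fix x y
    have "0 \<le> (\<phi> x - \<phi> y)^2" by simp
    thus "\<phi> x * \<phi> y \<le> (\<phi> x)^2 / 2 + (\<phi> y)^2 / 2" by (simp add: power2_eq_square algebra_simps)
  qed
  also have "\<dots> = (\<Sum>x\<in>\<Lambda>. \<Sum>y\<in>\<Lambda>. green \<Lambda> x y * (\<phi> x)^2 / 2) + (\<Sum>x\<in>\<Lambda>. \<Sum>y\<in>\<Lambda>. green \<Lambda> x y * (\<phi> y)^2 / 2)"
    by (simp add: sum.distrib algebra_simps)
  also have "(\<Sum>x\<in>\<Lambda>. \<Sum>y\<in>\<Lambda>. green \<Lambda> x y * (\<phi> y)^2 / 2) = (\<Sum>x\<in>\<Lambda>. \<Sum>y\<in>\<Lambda>. green \<Lambda> x y * (\<phi> x)^2 / 2)"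
    by (subst sum.swap) (simp add: green_sym)
  also have "(\<Sum>x\<in>\<Lambda>. \<Sum>y\<in>\<Lambda>. green \<Lambda> x y * (\<phi> x)^2 / 2) + (\<Sum>x\<in>\<Lambda>. \<Sum>y\<in>\<Lambda>. green \<Lambda> x y * (\<phi> x)^2 / 2)
      = (\<Sum>x\<in>\<Lambda>. \<Sum>y\<in>\<Lambda>. green \<Lambda> x y * (\<phi> x)^2)"
    by (simp add: sum_divide_distrib[symmetric])
  also have "\<dots> = (\<Sum>x\<in>\<Lambda>. (\<phi> x)^2 * (\<Sum>y\<in>\<Lambda>. green \<Lambda> x y))"
    by (intro sum.cong refl) (simp add: sum_distrib_right mult.commute)
  also have "\<dots> \<le> (\<Sum>x\<in>\<Lambda>. (\<phi> x)^2 * ?K)"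
    by (intro sum_mono mult_left_mono Kx) auto
  also have "\<dots> = ?K * inner_on \<Lambda> \<phi> \<phi>"
    unfolding inner_on_def power2_eq_square sum_distrib_right[symmetric] by (rule mult.commute)
  finally show ?thesis .
qed

text \<open>The Green operator gives \<open>B(G\<phi>, \<phi>) = 2d |\<phi>|\<^sup>2\<close> and, by the row-sum bound,
  \<open>Q(G\<phi>) \<le> 2d K |\<phi>|\<^sup>2\<close>; expanding \<open>0 \<le> Q(G\<phi> / K - \<phi>)\<close> yields coercivity.\<close>
lemma dirichlet_energy_coercive:
  fixes \<Lambda> :: "(int^'d) set"
  assumes fin: "finite \<Lambda>"
  obtains c where "c > 0" "\<And>\<phi>. dirichlet_energy \<Lambda> \<phi> \<ge> c * inner_on \<Lambda> \<phi> \<phi>"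
proof -
  let ?d = "real (2 * CARD('d))"
  define K where "K = (\<Sum>x\<in>\<Lambda>. ?d * lyapunov \<Lambda> x) + 1"
  have K0: "(\<Sum>x\<in>\<Lambda>. ?d * lyapunov \<Lambda> x) \<ge> 0"
    by (intro sum_nonneg mult_nonneg_nonneg lyapunov_nonneg[OF fin]) auto
  hence Kpos: "K > 0" by (simp add: K_def)
  have dpos: "?d > 0" by simp
  have main: "dirichlet_energy \<Lambda> \<phi> \<ge> (?d / K) * inner_on \<Lambda> \<phi> \<phi>" for \<phi> :: "int^'d \<Rightarrow> real"
  proof -
    let ?g = "green_op \<Lambda> \<phi>" let ?I = "inner_on \<Lambda> \<phi> \<phi>" let ?t = "1 / K"
    have I0: "?I \<ge> 0" unfolding inner_on_def by (intro sum_nonneg) simp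
    have "0 \<le> dirichlet_energy \<Lambda> (\<lambda>x. ?t * ?g x + (-1) * \<phi> x)" by (rule dirichlet_energy_nonneg)
    also have "dirichlet_energy \<Lambda> (\<lambda>x. ?t * ?g x + (-1) * \<phi> x) = ?t^2 * dirichlet_energy \<Lambda> ?g + 2 * ?t * (-1) * dirichlet_form \<Lambda> ?g \<phi> + (-1)^2 * dirichlet_energy \<Lambda> \<phi>"
      by (rule dirichlet_energy_lincomb)
    finally have a: "2 * ?t * dirichlet_form \<Lambda> ?g \<phi> \<le> ?t^2 * dirichlet_energy \<Lambda> ?g + dirichlet_energy \<Lambda> \<phi>" by simp
    have b: "dirichlet_form \<Lambda> ?g \<phi> = ?d * ?I" by (rule dirichlet_form_green_op[OF fin])
    have "dirichlet_energy \<Lambda> ?g = ?d * inner_on \<Lambda> \<phi> ?g" unfolding dirichlet_energy_def by (rule dirichlet_form_green_op[OF fin])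
    also have "\<dots> \<le> ?d * (K * ?I)"
    proof -
      have "inner_on \<Lambda> \<phi> ?g \<le> (K - 1) * ?I" using inner_on_green_op_le[OF fin, of \<phi>] by (simp add: K_def)
      also have "\<dots> \<le> K * ?I" using I0 by (simp add: algebra_simps)
      finally show ?thesis using dpos by simp
    qed
    finally have c: "dirichlet_energy \<Lambda> ?g \<le> ?d * (K * ?I)" .
    have "2 * ?t * (?d * ?I) \<le> ?t^2 * (?d * (K * ?I)) + dirichlet_energy \<Lambda> \<phi>"
      using a b c Kpos by (smt (verit) mult_left_mono zero_le_power2)
    moreover have "?t^2 * (?d * (K * ?I)) = ?t * (?d * ?I)" using Kpos by (simp add: power2_eq_square field_simps)
    ultimately have "?t * (?d * ?I) \<le> dirichlet_energy \<Lambda> \<phi>" by linarith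
    thus ?thesis by simp
  qed
  show ?thesis by (rule that[of "?d / K"]) (use Kpos main in auto)
qed

lemma dirichlet_energy_green_op: "finite \<Lambda> \<Longrightarrow> dirichlet_energy \<Lambda> (green_op \<Lambda> \<xi>) = real (2 * CARD('d)) * green_form \<Lambda> (\<xi> :: int^'d \<Rightarrow> real)"
  unfolding dirichlet_energy_def by (simp add: dirichlet_form_green_op inner_on_def green_form_def green_op_def sum_distrib_left algebra_simps)

lemma green_form_nonneg: "finite \<Lambda> \<Longrightarrow> green_form \<Lambda> (\<xi> :: int^'d \<Rightarrow> real) \<ge> 0"
  using dirichlet_energy_green_op[of \<Lambda> \<xi>] dirichlet_energy_nonneg[of \<Lambda> "green_op \<Lambda> \<xi>"]
  by (simp add: zero_le_mult_iff)

interpretation lbprod: product_sigma_finite "\<lambda>_::int^'d. lborel::real measure"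
  by standard

lemma measurable_field_component: "x \<in> \<Lambda> \<Longrightarrow> (\<lambda>\<phi>. \<phi> x) \<in> borel_measurable (fieldM \<Lambda>)"
  unfolding fieldM_def by measurable

definition shift_field :: "(int^'d) set \<Rightarrow> (int^'d \<Rightarrow> real) \<Rightarrow> (int^'d \<Rightarrow> real) \<Rightarrow> int^'d \<Rightarrow> real" where
  "shift_field \<Lambda> m \<phi> = (\<lambda>x\<in>\<Lambda>. \<phi> x + m x)"

lemma measurable_shift_field: "shift_field \<Lambda> m \<in> measurable (fieldM \<Lambda>) (fieldM \<Lambda>)"
  unfolding fieldM_def shift_field_def by measurable

lemma emeasure_lborel_translate: "A \<in> sets borel \<Longrightarrow> emeasure lborel ((\<lambda>t::real. t + c) -` A) = emeasure lborel A"
proof -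
  assume A: "A \<in> sets borel"
  have "emeasure lborel A = emeasure (distr lborel borel ((+) c)) A" by (simp add: lborel_distr_plus)
  also have "\<dots> = emeasure lborel ((+) c -` A \<inter> space lborel)" using A by (simp add: emeasure_distr)
  moreover have "(\<lambda>t::real. t + c) = (+) c" by (auto simp: add.commute)
  ultimately show ?thesis by simp
qed

lemma translate_vimage_borel: "A \<in> sets borel \<Longrightarrow> (\<lambda>t::real. t + c) -` A \<in> sets borel"
  using measurable_sets[of "\<lambda>t::real. t+c" borel borel A] by simp

lemma distr_shift_field:
  fixes \<Lambda> :: "(int^'d) set"
  assumes fin: "finite \<Lambda>" shows "distr (fieldM \<Lambda>) (fieldM \<Lambda>) (shift_field \<Lambda> m) = fieldM \<Lambda>"
  unfolding fieldM_def
proof (rule lbprod.PiM_eqI[OF fin])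
  fix A :: "int^'d \<Rightarrow> real set" assume A: "\<And>i. i \<in> \<Lambda> \<Longrightarrow> A i \<in> sets lborel"
  have pre: "shift_field \<Lambda> m -` Pi\<^sub>E \<Lambda> A \<inter> space (Pi\<^sub>M \<Lambda> (\<lambda>_. lborel)) = Pi\<^sub>E \<Lambda> (\<lambda>i. (\<lambda>t. t + m i) -` A i)"
    by (auto simp: shift_field_def space_PiM PiE_def Pi_def extensional_def)
  have "emeasure (distr (Pi\<^sub>M \<Lambda> (\<lambda>_. lborel)) (Pi\<^sub>M \<Lambda> (\<lambda>_. lborel)) (shift_field \<Lambda> m)) (Pi\<^sub>E \<Lambda> A)
      = emeasure (Pi\<^sub>M \<Lambda> (\<lambda>_. lborel)) (Pi\<^sub>E \<Lambda> (\<lambda>i. (\<lambda>t. t + m i) -` A i))"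
    using A measurable_shift_field[of \<Lambda> m] unfolding fieldM_def
    by (subst emeasure_distr) (auto intro!: sets_PiM_I_finite fin simp: pre)
  also have "\<dots> = (\<Prod>i\<in>\<Lambda>. emeasure lborel ((\<lambda>t. t + m i) -` A i))"
    using A fin by (subst lbprod.emeasure_PiM) (auto intro: translate_vimage_borel)
  also have "\<dots> = (\<Prod>i\<in>\<Lambda>. emeasure lborel (A i))"
    using A by (intro prod.cong refl emeasure_lborel_translate) auto
  finally show "emeasure (distr (Pi\<^sub>M \<Lambda> (\<lambda>_. lborel)) (Pi\<^sub>M \<Lambda> (\<lambda>_. lborel)) (shift_field \<Lambda> m)) (Pi\<^sub>E \<Lambda> A) = (\<Prod>i\<in>\<Lambda>. emeasure lborel (A i))" .
qed auto

lemma integral_shift_field: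
  assumes "finite \<Lambda>" "f \<in> borel_measurable (fieldM \<Lambda>)"
  shows "(\<integral>\<phi>. f (shift_field \<Lambda> m \<phi>) \<partial>fieldM \<Lambda>) = integral\<^sup>L (fieldM \<Lambda>) (f :: _ \<Rightarrow> real)"
  using integral_distr[OF measurable_shift_field assms(2), of m] distr_shift_field[OF assms(1), of m] by simp

lemma integrable_shift_field_iff:
  assumes "finite \<Lambda>" "f \<in> borel_measurable (fieldM \<Lambda>)"
  shows "integrable (fieldM \<Lambda>) (\<lambda>\<phi>. f (shift_field \<Lambda> m \<phi>)) \<longleftrightarrow> integrable (fieldM \<Lambda>) (f :: _ \<Rightarrow> real)"
  using integrable_distr_eq[OF measurable_shift_field assms(2), of m] distr_shift_field[OF assms(1), of m] by simp

lemma borel_measurable_pair_sum: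
  assumes "finite S" "\<And>x y. (x,y) \<in> S \<Longrightarrow> (\<lambda>\<phi>. F \<phi> x y) \<in> borel_measurable M"
  shows "(\<lambda>\<phi>. \<Sum>(x,y)\<in>S. F \<phi> x y :: real) \<in> borel_measurable M"
  by (rule borel_measurable_sum) (use assms in auto)

lemma measurable_dirichlet_energy_shifted:
  fixes \<Lambda> :: "(int^'d) set"
  assumes fin: "finite \<Lambda>"
  shows "(\<lambda>\<phi>. dirichlet_energy \<Lambda> (\<lambda>x. \<phi> x - m x)) \<in> borel_measurable (fieldM \<Lambda>)"
proof -
  have m1: "(\<lambda>\<phi>. \<Sum>(x,y)\<in>nnpairs \<Lambda>. ((\<phi> x - m x) - (\<phi> y - m y))^2) \<in> borel_measurable (fieldM \<Lambda>)"
  proof (rule borel_measurable_pair_sum[OF finite_nnpairs[OF fin]])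
    fix x y assume "(x,y) \<in> nnpairs \<Lambda>"
    hence xy: "x \<in> \<Lambda>" "y \<in> \<Lambda>" by (auto simp: nnpairs_def)
    show "(\<lambda>\<phi>. ((\<phi> x - m x) - (\<phi> y - m y))^2) \<in> borel_measurable (fieldM \<Lambda>)"
      using measurable_field_component[OF xy(1)] measurable_field_component[OF xy(2)] by measurable
  qed
  have m2: "(\<lambda>\<phi>. \<Sum>(x,y)\<in>bdry_pairs \<Lambda>. (\<phi> x - m x)^2) \<in> borel_measurable (fieldM \<Lambda>)"
  proof (rule borel_measurable_pair_sum[OF finite_bdry_pairs[OF fin]])
    fix x y assume "(x,y) \<in> bdry_pairs \<Lambda>"
    hence xy: "x \<in> \<Lambda>" by (auto simp: bdry_pairs_def)
    show "(\<lambda>\<phi>. (\<phi> x - m x)^2) \<in> borel_measurable (fieldM \<Lambda>)"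
      using measurable_field_component[OF xy(1)] by measurable
  qed
  show ?thesis unfolding dirichlet_energy_expand using m1 m2 by measurable
qed

lemma measurable_inner_on_shifted:
  assumes fin: "finite \<Lambda>"
  shows "(\<lambda>\<phi>. inner_on \<Lambda> \<xi> (\<lambda>x. \<phi> x - m x)) \<in> borel_measurable (fieldM \<Lambda>)"
  unfolding inner_on_def
proof (rule borel_measurable_sum)
  fix x assume "x \<in> \<Lambda>"
  from measurable_field_component[OF this] show "(\<lambda>\<phi>. \<xi> x * (\<phi> x - m x)) \<in> borel_measurable (fieldM \<Lambda>)" by measurable
qed

lemma integrable_exp_neg_square: "a > 0 \<Longrightarrow> integrable lborel (\<lambda>t::real. exp (- (a * t^2)))"
proof -
  assume a: "a > 0"
  define \<sigma> where "\<sigma> = sqrt (1 / (2 * a))"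
  have s: "\<sigma> > 0" using a by (simp add: \<sigma>_def)
  have s2: "\<sigma>^2 = 1 / (2*a)" using a by (simp add: \<sigma>_def)
  have sq: "sqrt (2 * pi * \<sigma>^2) > 0" using s by simp
  have eq: "exp (- (a * t^2)) = sqrt (2 * pi * \<sigma>^2) * normal_density 0 \<sigma> t" for t
  proof -
    have h: "2*\<sigma>^2 = 1/a" using s2 by simp
    have "(t - 0)^2 / (2*\<sigma>^2) = a*t^2" unfolding h by simp
    thus ?thesis using sq s unfolding normal_density_def by simp
  qed
  show ?thesis unfolding eq by (intro integrable_mult_right integrable_normal_density) (use s in auto)
qed

lemma integrable_gaussian:
  fixes \<Lambda> :: "(int^'d) set"
  assumes fin: "finite \<Lambda>" and c: "c > 0"
  shows "integrable (fieldM \<Lambda>) (\<lambda>\<phi>. exp (- c * dirichlet_energy \<Lambda> \<phi>))"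
proof -
  obtain c0 where c0: "c0 > 0" "\<And>\<phi>. dirichlet_energy \<Lambda> \<phi> \<ge> c0 * inner_on \<Lambda> \<phi> \<phi>" using dirichlet_energy_coercive[OF fin] by blast
  have int: "integrable (fieldM \<Lambda>) (\<lambda>\<phi>. \<Prod>x\<in>\<Lambda>. exp (- ((c*c0) * (\<phi> x)^2)))"
    unfolding fieldM_def
    by (rule lbprod.product_integrable_prod[OF fin]) (use c c0 in \<open>auto intro!: integrable_exp_neg_square\<close>)
  show ?thesis
  proof (rule Bochner_Integration.integrable_bound[OF int])
    show "(\<lambda>\<phi>. exp (- c * dirichlet_energy \<Lambda> \<phi>)) \<in> borel_measurable (fieldM \<Lambda>)"
      using measurable_dirichlet_energy_shifted[OF fin, of "\<lambda>_. 0"] by simp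
    show "AE \<phi> in fieldM \<Lambda>. norm (exp (- c * dirichlet_energy \<Lambda> \<phi>)) \<le> norm (\<Prod>x\<in>\<Lambda>. exp (- ((c*c0) * (\<phi> x)^2)))"
    proof (intro AE_I2)
      fix \<phi> :: "int^'d \<Rightarrow> real"
      have "(\<Prod>x\<in>\<Lambda>. exp (- ((c*c0) * (\<phi> x)^2))) = exp (- (c*c0) * inner_on \<Lambda> \<phi> \<phi>)"
        by (simp add: exp_sum[symmetric] inner_on_def sum_distrib_left power2_eq_square fin)
      moreover have "exp (- c * dirichlet_energy \<Lambda> \<phi>) \<le> exp (- (c*c0) * inner_on \<Lambda> \<phi> \<phi>)"
        using c0(2)[of \<phi>] c by (simp add: mult.assoc)
      ultimately show "norm (exp (- c * dirichlet_energy \<Lambda> \<phi>)) \<le> norm (\<Prod>x\<in>\<Lambda>. exp (- ((c*c0) * (\<phi> x)^2)))"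
        by simp
    qed
  qed
qed

lemma emeasure_space_fieldM_neq_0: "finite \<Lambda> \<Longrightarrow> emeasure (fieldM \<Lambda>) (space (fieldM \<Lambda>)) \<noteq> 0"
proof -
  assume fin: "finite \<Lambda>"
  have "space (fieldM \<Lambda>) = Pi\<^sub>E \<Lambda> (\<lambda>_. UNIV)" by (simp add: fieldM_def space_PiM)
  hence "emeasure (fieldM \<Lambda>) (space (fieldM \<Lambda>)) = (\<Prod>i\<in>\<Lambda>. emeasure lborel (UNIV::real set))"
    using fin unfolding fieldM_def by (simp add: lbprod.emeasure_PiM)
  also have "\<dots> = top ^ card \<Lambda>" by simp
  also have "\<dots> \<noteq> 0" by (simp add: top_power_ennreal)
  finally show ?thesis .
qed

lemma integral_fieldM_pos:
  assumes fin: "finite \<Lambda>" and int: "integrable (fieldM \<Lambda>) f" and pos: "\<And>\<phi>. f \<phi> > (0::real)"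
  shows "integral\<^sup>L (fieldM \<Lambda>) f > 0"
proof -
  have nn: "AE \<phi> in fieldM \<Lambda>. 0 \<le> f \<phi>" by (rule AE_I2) (rule less_imp_le[OF pos])
  have "integral\<^sup>L (fieldM \<Lambda>) f \<ge> 0" by (rule integral_nonneg_AE[OF nn])
  moreover have "integral\<^sup>L (fieldM \<Lambda>) f \<noteq> 0"
  proof
    assume "integral\<^sup>L (fieldM \<Lambda>) f = 0"
    hence ae: "AE \<phi> in fieldM \<Lambda>. f \<phi> = 0"
      using integral_nonneg_eq_0_iff_AE[OF int nn] by simp
    have "AE \<phi> in fieldM \<Lambda>. False"
      by (rule AE_mp[OF ae]) (rule AE_I2, use pos in \<open>metis less_irrefl\<close>)
    hence "ae_filter (fieldM \<Lambda>) = bot" using trivial_limit_def by blast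
    thus False using emeasure_space_fieldM_neq_0[OF fin] by (simp add: ae_filter_eq_bot_iff)
  qed
  ultimately show ?thesis by simp
qed

lemma inner_on_cong: "(\<And>x. x \<in> \<Lambda> \<Longrightarrow> f x = f' x) \<Longrightarrow> inner_on \<Lambda> \<xi> f = inner_on \<Lambda> \<xi> f'"
  unfolding inner_on_def by (rule sum.cong) auto

lemma shift_field_apply: "x \<in> \<Lambda> \<Longrightarrow> shift_field \<Lambda> m \<phi> x = \<phi> x + m x"
  by (simp add: shift_field_def)

lemma measurable_exp_dirichlet_energy: "finite \<Lambda> \<Longrightarrow> (\<lambda>\<phi>. exp (- c * dirichlet_energy \<Lambda> \<phi>)) \<in> borel_measurable (fieldM \<Lambda>)"
  using measurable_dirichlet_energy_shifted[of \<Lambda> "\<lambda>_. 0"] by simp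

definition gaussian_partition :: "real \<Rightarrow> (int^'d) set \<Rightarrow> real" where
  "gaussian_partition c \<Lambda> = (\<integral>\<phi>. exp (- c * dirichlet_energy \<Lambda> \<phi>) \<partial>fieldM \<Lambda>)"

definition gaussian_weight ::
  "real \<Rightarrow> (int^'d) set \<Rightarrow> (int^'d \<Rightarrow> real) \<Rightarrow> (int^'d \<Rightarrow> real) \<Rightarrow> (int^'d \<Rightarrow> real) \<Rightarrow> real" where
  "gaussian_weight c \<Lambda> \<psi> \<xi> \<phi> =
     exp (- c * dirichlet_energy \<Lambda> (\<lambda>x. \<phi> x - \<psi> x) - 1/2 * inner_on \<Lambda> \<xi> (\<lambda>x. \<phi> x - \<psi> x))"

lemma gaussian_partition_pos:
  fixes \<Lambda> :: "(int^'d) set"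
  shows "finite \<Lambda> \<Longrightarrow> c > 0 \<Longrightarrow> gaussian_partition c \<Lambda> > 0"
  unfolding gaussian_partition_def by (rule integral_fieldM_pos[OF _ integrable_gaussian]) auto

lemma dirichlet_energy_add_green_op:
  fixes \<Lambda> :: "(int^'d) set" and \<xi> \<phi> :: "int^'d \<Rightarrow> real"
  assumes fin: "finite \<Lambda>"
  shows "dirichlet_energy \<Lambda> (\<lambda>x. \<phi> x + k * green_op \<Lambda> \<xi> x)
    = dirichlet_energy \<Lambda> \<phi> + 2 * k * real (2 * CARD('d)) * inner_on \<Lambda> \<xi> \<phi>
      + k^2 * real (2 * CARD('d)) * green_form \<Lambda> \<xi>"
  using dirichlet_energy_lincomb[of \<Lambda> 1 \<phi> k "green_op \<Lambda> \<xi>"]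
  by (simp add: dirichlet_form_commute[of \<Lambda> \<phi>] dirichlet_form_green_op[OF fin]
      dirichlet_energy_green_op[OF fin])

lemma integral_gaussian_linear_term:
  fixes \<Lambda> :: "(int^'d) set" and \<xi> :: "int^'d \<Rightarrow> real"
  assumes fin: "finite \<Lambda>" and c: "c > 0"
  shows "integrable (fieldM \<Lambda>) (\<lambda>\<phi>. exp (- c * dirichlet_energy \<Lambda> \<phi> - 1/2 * inner_on \<Lambda> \<xi> \<phi>))"
    and "(\<integral>\<phi>. exp (- c * dirichlet_energy \<Lambda> \<phi> - 1/2 * inner_on \<Lambda> \<xi> \<phi>) \<partial>fieldM \<Lambda>)
         = exp (green_form \<Lambda> \<xi> / (16 * c * real (2 * CARD('d)))) * gaussian_partition c \<Lambda>"
proof -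
  define D where "D = real (2 * CARD('d))"
  have D: "D > 0" by (simp add: D_def)
  define m where "m x = 1 / (4 * c * D) * green_op \<Lambda> \<xi> x" for x
  let ?E = "\<lambda>\<phi>. exp (- c * dirichlet_energy \<Lambda> \<phi>)"
  have square: "exp (- c * dirichlet_energy \<Lambda> \<phi> - 1/2 * inner_on \<Lambda> \<xi> \<phi>)
      = exp (green_form \<Lambda> \<xi> / (16 * c * D)) * ?E (shift_field \<Lambda> m \<phi>)" for \<phi>
  proof -
    have "dirichlet_energy \<Lambda> (shift_field \<Lambda> m \<phi>) = dirichlet_energy \<Lambda> (\<lambda>x. \<phi> x + m x)"
      by (rule dirichlet_energy_cong) (simp add: shift_field_apply)
    also have "\<dots> = dirichlet_energy \<Lambda> \<phi> + 1 / (2 * c) * inner_on \<Lambda> \<xi> \<phi> + green_form \<Lambda> \<xi> / (16 * c^2 * D)"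
      unfolding m_def dirichlet_energy_add_green_op[OF fin] D_def[symmetric]
      using c D by (simp add: power2_eq_square field_simps)
    finally show ?thesis
      using c by (simp add: exp_add[symmetric] power2_eq_square field_simps)
  qed
  have int: "integrable (fieldM \<Lambda>) (\<lambda>\<phi>. ?E (shift_field \<Lambda> m \<phi>))"
    using integrable_shift_field_iff[OF fin measurable_exp_dirichlet_energy[OF fin]] integrable_gaussian[OF fin c]
    by blast
  then show "integrable (fieldM \<Lambda>) (\<lambda>\<phi>. exp (- c * dirichlet_energy \<Lambda> \<phi> - 1/2 * inner_on \<Lambda> \<xi> \<phi>))"
    unfolding square by (rule integrable_mult_right)
  show "(\<integral>\<phi>. exp (- c * dirichlet_energy \<Lambda> \<phi> - 1/2 * inner_on \<Lambda> \<xi> \<phi>) \<partial>fieldM \<Lambda>)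
      = exp (green_form \<Lambda> \<xi> / (16 * c * real (2 * CARD('d)))) * gaussian_partition c \<Lambda>"
    unfolding square integral_mult_right_zero integral_shift_field[OF fin measurable_exp_dirichlet_energy[OF fin]]
    by (simp add: D_def gaussian_partition_def)
qed

lemma gaussian_weight_integral:
  fixes \<Lambda> :: "(int^'d) set" and \<xi> \<psi> :: "int^'d \<Rightarrow> real"
  assumes fin: "finite \<Lambda>" and c: "c > 0"
  shows "integrable (fieldM \<Lambda>) (gaussian_weight c \<Lambda> \<psi> \<xi>)"
    and "integral\<^sup>L (fieldM \<Lambda>) (gaussian_weight c \<Lambda> \<psi> \<xi>)
         = exp (green_form \<Lambda> \<xi> / (16 * c * real (2 * CARD('d)))) * gaussian_partition c \<Lambda>"
proof -
  let ?f = "gaussian_weight c \<Lambda> \<psi> \<xi>"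
  have meas: "?f \<in> borel_measurable (fieldM \<Lambda>)"
    unfolding gaussian_weight_def
    using measurable_dirichlet_energy_shifted[OF fin, of \<psi>] measurable_inner_on_shifted[OF fin, of \<xi> \<psi>]
    by measurable
  have shift: "?f (shift_field \<Lambda> \<psi> \<phi>) = exp (- c * dirichlet_energy \<Lambda> \<phi> - 1/2 * inner_on \<Lambda> \<xi> \<phi>)" for \<phi>
  proof -
    have "dirichlet_energy \<Lambda> (\<lambda>x. shift_field \<Lambda> \<psi> \<phi> x - \<psi> x) = dirichlet_energy \<Lambda> \<phi>"
      by (rule dirichlet_energy_cong) (simp add: shift_field_apply)
    moreover have "inner_on \<Lambda> \<xi> (\<lambda>x. shift_field \<Lambda> \<psi> \<phi> x - \<psi> x) = inner_on \<Lambda> \<xi> \<phi>"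
      by (rule inner_on_cong) (simp add: shift_field_apply)
    ultimately show ?thesis by (simp add: gaussian_weight_def)
  qed
  show "integrable (fieldM \<Lambda>) ?f"
    using integrable_shift_field_iff[OF fin meas, of \<psi>] integral_gaussian_linear_term(1)[OF fin c, of \<xi>]
    unfolding shift by blast
  have "integral\<^sup>L (fieldM \<Lambda>) ?f = (\<integral>\<phi>. ?f (shift_field \<Lambda> \<psi> \<phi>) \<partial>fieldM \<Lambda>)"
    by (rule integral_shift_field[OF fin meas, symmetric])
  then show "integral\<^sup>L (fieldM \<Lambda>) ?f
         = exp (green_form \<Lambda> \<xi> / (16 * c * real (2 * CARD('d)))) * gaussian_partition c \<Lambda>"
    unfolding shift using integral_gaussian_linear_term(2)[OF fin c, of \<xi>] by simp
qed

lemma even_quadratic_upper_bound: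
  fixes V V' V'' :: "real \<Rightarrow> real"
  assumes dV: "\<forall>s. (V has_real_derivative V' s) (at s)"
    and dV': "\<forall>s. (V' has_real_derivative V'' s) (at s)"
    and even: "\<forall>s. V (- s) = V s"
    and upper: "\<forall>s. V'' s \<le> C2"
  shows "V s \<le> V 0 + C2 / 2 * s^2"
proof -
  have "DERIV (\<lambda>x. V (- x)) 0 :> - V' 0" using DERIV_mirror[where f=V and x=0 and y="V' 0"] dV by simp
  moreover have "(\<lambda>x. V (- x)) = V" using even by auto
  ultimately have "DERIV V 0 :> - V' 0" by simp
  hence V'0: "V' 0 = 0" using DERIV_unique dV by fastforce
  define g where "g x = V' x - C2 * x" for x
  define h where "h x = V x - C2 / 2 * x^2" for x
  have dg: "DERIV g x :> V'' x - C2" for x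
    unfolding g_def by (auto intro!: derivative_eq_intros dV'[rule_format])
  have dh: "DERIV h x :> g x" for x
    unfolding h_def g_def by (auto intro!: derivative_eq_intros dV[rule_format] simp: power2_eq_square)
  have g_anti: "g y \<le> g x" if "x \<le> y" for x y
    by (rule DERIV_nonpos_imp_nonincreasing[OF that]) (use dg upper in \<open>auto intro!: exI[of _ "V'' _ - C2"]\<close>)
  have g0: "g 0 = 0" by (simp add: g_def V'0)
  have "h s \<le> h 0"
  proof (cases "s \<ge> 0")
    case True
    show ?thesis
    proof (rule DERIV_nonpos_imp_nonincreasing[OF True])
      fix x assume "0 \<le> x" "x \<le> s"
      thus "\<exists>y. DERIV h x :> y \<and> y \<le> 0" using dh[of x] g_anti[of 0 x] g0 by auto
    qed
  next
    case False
    show ?thesis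
    proof (rule DERIV_nonneg_imp_nondecreasing[where f=h and a=s and b=0])
      show "s \<le> 0" using False by simp
      fix x assume "s \<le> x" "x \<le> 0"
      thus "\<exists>y. DERIV h x :> y \<and> y \<ge> 0" using dh[of x] g_anti[of x 0] g0 by auto
    qed
  qed
  thus ?thesis by (simp add: h_def)
qed

definition bond_count :: "(int^'d) set \<Rightarrow> real" where
  "bond_count \<Lambda> = 1/2 * real (card (nnpairs \<Lambda>)) + real (card (bdry_pairs \<Lambda>))"

definition tilt_energy :: "(int^'d) set \<Rightarrow> (int^'d \<Rightarrow> real) \<Rightarrow> real" where
  "tilt_energy \<Lambda> \<psi> = 1/2 * (\<Sum>(x,y)\<in>nnpairs \<Lambda>. (\<psi> x - \<psi> y)^2) + (\<Sum>(x,y)\<in>bdry_pairs \<Lambda>. (\<psi> x - \<psi> y)^2)"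

definition bond_energy :: "(int^'d) set \<Rightarrow> (int^'d \<Rightarrow> real) \<Rightarrow> (int^'d \<Rightarrow> real) \<Rightarrow> real" where
  "bond_energy \<Lambda> \<psi> \<phi> = 1/2 * (\<Sum>(x,y)\<in>nnpairs \<Lambda>. (\<phi> x - \<phi> y)^2) + (\<Sum>(x,y)\<in>bdry_pairs \<Lambda>. (\<phi> x - \<psi> y)^2)"

lemma bond_energy_tilt_decomp:
  fixes \<Lambda> :: "(int^'d) set"
  assumes fin: "finite \<Lambda>"
  shows "bond_energy \<Lambda> (tilt u) \<phi> = dirichlet_energy \<Lambda> (\<lambda>x. \<phi> x - tilt u x) + tilt_energy \<Lambda> (tilt u)"
proof -
  let ?p = "tilt u" let ?f = "\<lambda>x. \<phi> x - tilt u x"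
  have e1: "(\<Sum>(x,y)\<in>nnpairs \<Lambda>. (\<phi> x - \<phi> y)^2) = (\<Sum>(x,y)\<in>nnpairs \<Lambda>. (?f x - ?f y)^2) + 2 * (\<Sum>(x,y)\<in>nnpairs \<Lambda>. (?f x - ?f y) * (?p x - ?p y)) + (\<Sum>(x,y)\<in>nnpairs \<Lambda>. (?p x - ?p y)^2)"
    unfolding sum_distrib_left sum.distrib[symmetric] by (intro sum.cong) (auto simp: algebra_simps power2_eq_square)
  have e2: "(\<Sum>(x,y)\<in>bdry_pairs \<Lambda>. (\<phi> x - ?p y)^2) = (\<Sum>(x,y)\<in>bdry_pairs \<Lambda>. (?f x)^2) + 2 * (\<Sum>(x,y)\<in>bdry_pairs \<Lambda>. ?f x * (?p x - ?p y)) + (\<Sum>(x,y)\<in>bdry_pairs \<Lambda>. (?p x - ?p y)^2)"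
    unfolding sum_distrib_left sum.distrib[symmetric] by (intro sum.cong) (auto simp: algebra_simps power2_eq_square)
  have cz: "1/2 * (\<Sum>(x,y)\<in>nnpairs \<Lambda>. (?f x - ?f y) * (?p x - ?p y)) + (\<Sum>(x,y)\<in>bdry_pairs \<Lambda>. ?f x * (?p x - ?p y)) = 0"
    by (rule tilt_cross_terms_eq_0[OF fin])
  show ?thesis unfolding bond_energy_def tilt_energy_def dirichlet_energy_expand e1 e2 using cz by (simp add: algebra_simps)
qed

lemma in_bdryI: "x \<in> \<Lambda> \<Longrightarrow> y \<notin> \<Lambda> \<Longrightarrow> nbr x y \<Longrightarrow> y \<in> bdry \<Lambda>"
  by (auto simp: bdry_def nbr_sym)

definition touching_pairs :: "(int^'d) set \<Rightarrow> ((int^'d) \<times> (int^'d)) set" where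
  "touching_pairs \<Lambda> = {(x,y). nbr x y \<and> (x \<in> \<Lambda> \<or> y \<in> \<Lambda>)}"

lemma touching_pairs_eq:
  "touching_pairs \<Lambda> = nnpairs \<Lambda> \<union> bdry_pairs \<Lambda> \<union> prod.swap ` bdry_pairs \<Lambda>"
  by (auto simp: touching_pairs_def nnpairs_def bdry_pairs_def image_iff intro: in_bdryI)
    (auto simp: bdry_def nbr_sym)

lemma touching_pairs_subset: "touching_pairs \<Lambda> \<subseteq> nnpairs (\<Lambda> \<union> bdry \<Lambda>)"
  by (auto simp: touching_pairs_def nnpairs_def) (metis in_bdryI nbr_sym)+

lemma finite_touching_pairs: "finite \<Lambda> \<Longrightarrow> finite (touching_pairs \<Lambda>)"
  by (rule finite_subset[OF touching_pairs_subset]) (simp add: finite_nnpairs finite_bdry)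

lemma sum_touching_pairs:
  assumes fin: "finite \<Lambda>"
  shows "sum F (touching_pairs \<Lambda>) = sum F (nnpairs \<Lambda>) + sum F (bdry_pairs \<Lambda>) + sum (F \<circ> prod.swap) (bdry_pairs \<Lambda>)"
proof -
  have "nnpairs \<Lambda> \<inter> bdry_pairs \<Lambda> = {}" "(nnpairs \<Lambda> \<union> bdry_pairs \<Lambda>) \<inter> prod.swap ` bdry_pairs \<Lambda> = {}"
    by (auto simp: nnpairs_def bdry_pairs_def bdry_def)
  moreover have "sum F (prod.swap ` bdry_pairs \<Lambda>) = sum (F \<circ> prod.swap) (bdry_pairs \<Lambda>)"
    by (rule sum.reindex) simp
  ultimately show ?thesis
    using fin by (simp add: touching_pairs_eq sum.union_disjoint finite_nnpairs finite_bdry_pairs)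
qed

lemma bond_count_eq: "finite \<Lambda> \<Longrightarrow> bond_count \<Lambda> = 1/2 * real (card (touching_pairs \<Lambda>))"
  using sum_touching_pairs[of \<Lambda> "\<lambda>_. 1::real"] by (simp add: bond_count_def)

lemma tilt_energy_eq:
  "finite \<Lambda> \<Longrightarrow> tilt_energy \<Lambda> \<psi> = 1/2 * (\<Sum>(x,y)\<in>touching_pairs \<Lambda>. (\<psi> x - \<psi> y)^2)"
  by (simp add: tilt_energy_def sum_touching_pairs comp_def case_prod_beta power2_commute)

lemma bond_count_le:
  assumes "finite \<Lambda>"
  shows "bond_count \<Lambda> \<le> real (card (nnpairs (\<Lambda> \<union> bdry \<Lambda>)))"
proof -
  have "card (touching_pairs \<Lambda>) \<le> card (nnpairs (\<Lambda> \<union> bdry \<Lambda>))"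
    by (rule card_mono[OF _ touching_pairs_subset]) (simp add: assms finite_nnpairs finite_bdry)
  then show ?thesis using assms by (simp add: bond_count_eq)
qed

lemma tilt_energy_le:
  assumes fin: "finite \<Lambda>"
  shows "tilt_energy \<Lambda> (tilt u) \<le> 1/2 * (\<Sum>(x,y)\<in>nnpairs (\<Lambda> \<union> bdry \<Lambda>). (zdot (x - y) u)^2)"
proof -
  have "(\<Sum>(x,y)\<in>touching_pairs \<Lambda>. (zdot (x - y) u)^2) \<le> (\<Sum>(x,y)\<in>nnpairs (\<Lambda> \<union> bdry \<Lambda>). (zdot (x - y) u)^2)"
    by (rule sum_mono2[OF _ touching_pairs_subset]) (auto simp: fin finite_nnpairs finite_bdry)
  then show ?thesis using fin by (simp add: tilt_energy_eq tilt_def zdot_diff)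
qed

lemma tilt_energy_nonneg: "tilt_energy \<Lambda> \<psi> \<ge> 0"
  unfolding tilt_energy_def by (intro add_nonneg_nonneg mult_nonneg_nonneg sum_nonneg) auto

lemma grad_energy_glue_tilt:
  fixes \<Lambda> :: "(int^'d) set"
  assumes fin: "finite \<Lambda>"
  shows "grad_energy u (glue \<Lambda> \<phi> (tilt u)) = 2 * dirichlet_energy \<Lambda> (\<lambda>x. \<phi> x - tilt u x)"
proof -
  define f where "f x = (if x \<in> \<Lambda> then \<phi> x - tilt u x else 0)" for x
  define F where "F = (\<lambda>(x,y). (f x - f y)^2)"
  have "(\<lambda>(x,y). (glue \<Lambda> \<phi> (tilt u) x - glue \<Lambda> \<phi> (tilt u) y - zdot (x - y) u)^2) = F"
    by (auto simp: F_def f_def glue_def zdot_diff tilt_def fun_eq_iff algebra_simps power2_commute)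
  then have "grad_energy u (glue \<Lambda> \<phi> (tilt u)) = infsum F {(x,y). nbr x y}"
    unfolding grad_energy_def by simp
  also have "\<dots> = infsum F (touching_pairs \<Lambda>)"
    by (rule infsum_cong_neutral) (auto simp: touching_pairs_def F_def f_def split: if_splits)
  also have "\<dots> = sum F (touching_pairs \<Lambda>)"
    using finite_touching_pairs[OF fin] by simp
  also have "\<dots> = 2 * dirichlet_energy \<Lambda> (\<lambda>x. \<phi> x - tilt u x)"
  proof -
    have "sum F (nnpairs \<Lambda>) = (\<Sum>(x,y)\<in>nnpairs \<Lambda>. ((\<phi> x - tilt u x) - (\<phi> y - tilt u y))^2)"
      by (rule sum.cong) (auto simp: F_def f_def nnpairs_def)
    moreover have "sum F (bdry_pairs \<Lambda>) = (\<Sum>(x,y)\<in>bdry_pairs \<Lambda>. (\<phi> x - tilt u x)^2)"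
      by (rule sum.cong) (auto simp: F_def f_def bdry_pairs_def bdry_def)
    moreover have "sum (F \<circ> prod.swap) (bdry_pairs \<Lambda>) = sum F (bdry_pairs \<Lambda>)"
      by (rule sum.cong) (auto simp: F_def power2_commute)
    ultimately show ?thesis
      unfolding sum_touching_pairs[OF fin] dirichlet_energy_expand by simp
  qed
  finally show ?thesis .
qed

lemma inner_on_split: "inner_on \<Lambda> \<xi> \<phi> = inner_on \<Lambda> \<xi> (\<lambda>x. \<phi> x - \<psi> x) + inner_on \<Lambda> \<xi> \<psi>"
  unfolding inner_on_def by (simp add: sum.distrib[symmetric] algebra_simps)

lemma hamiltonian_lower:
  fixes \<Lambda> :: "(int^'d) set"
  assumes lower: "\<forall>s. V s \<ge> A * s^2 - B"
  shows "hamiltonian V \<Lambda> \<psi> \<xi> \<phi> \<ge> A * bond_energy \<Lambda> \<psi> \<phi> - B * bond_count \<Lambda> + 1/2 * inner_on \<Lambda> \<xi> \<phi>"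
proof -
  have s1: "(\<Sum>(x,y)\<in>nnpairs \<Lambda>. A * (\<phi> x - \<phi> y)^2 - B) \<le> (\<Sum>(x,y)\<in>nnpairs \<Lambda>. V (\<phi> x - \<phi> y))"
    by (rule sum_mono) (use lower in auto)
  have s2: "(\<Sum>(x,y)\<in>bdry_pairs \<Lambda>. A * (\<phi> x - \<psi> y)^2 - B) \<le> (\<Sum>(x,y)\<in>bdry_pairs \<Lambda>. V (\<phi> x - \<psi> y))"
    by (rule sum_mono) (use lower in auto)
  have e1: "(\<Sum>(x,y)\<in>nnpairs \<Lambda>. A * (\<phi> x - \<phi> y)^2 - B) = A * (\<Sum>(x,y)\<in>nnpairs \<Lambda>. (\<phi> x - \<phi> y)^2) - B * real (card (nnpairs \<Lambda>))"
    by (simp add: sum_subtractf sum_distrib_left case_prod_beta)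
  have e2: "(\<Sum>(x,y)\<in>bdry_pairs \<Lambda>. A * (\<phi> x - \<psi> y)^2 - B) = A * (\<Sum>(x,y)\<in>bdry_pairs \<Lambda>. (\<phi> x - \<psi> y)^2) - B * real (card (bdry_pairs \<Lambda>))"
    by (simp add: sum_subtractf sum_distrib_left case_prod_beta)
  show ?thesis
    using s1 s2 unfolding e1 e2 hamiltonian_def bond_energy_def bond_count_def inner_on_def bdry_pairs_def[symmetric]
    by (simp add: algebra_simps)
qed

lemma hamiltonian_upper:
  fixes \<Lambda> :: "(int^'d) set"
  assumes up: "\<forall>s. V s \<le> V 0 + b * s^2"
  shows "hamiltonian V \<Lambda> \<psi> \<xi> \<phi> \<le> b * bond_energy \<Lambda> \<psi> \<phi> + V 0 * bond_count \<Lambda> + 1/2 * inner_on \<Lambda> \<xi> \<phi>"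
proof -
  have s1: "(\<Sum>(x,y)\<in>nnpairs \<Lambda>. V (\<phi> x - \<phi> y)) \<le> (\<Sum>(x,y)\<in>nnpairs \<Lambda>. V 0 + b * (\<phi> x - \<phi> y)^2)"
    by (rule sum_mono) (use up in auto)
  have s2: "(\<Sum>(x,y)\<in>bdry_pairs \<Lambda>. V (\<phi> x - \<psi> y)) \<le> (\<Sum>(x,y)\<in>bdry_pairs \<Lambda>. V 0 + b * (\<phi> x - \<psi> y)^2)"
    by (rule sum_mono) (use up in auto)
  have e1: "(\<Sum>(x,y)\<in>nnpairs \<Lambda>. V 0 + b * (\<phi> x - \<phi> y)^2) = b * (\<Sum>(x,y)\<in>nnpairs \<Lambda>. (\<phi> x - \<phi> y)^2) + V 0 * real (card (nnpairs \<Lambda>))"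
    by (simp add: sum.distrib sum_distrib_left case_prod_beta)
  have e2: "(\<Sum>(x,y)\<in>bdry_pairs \<Lambda>. V 0 + b * (\<phi> x - \<psi> y)^2) = b * (\<Sum>(x,y)\<in>bdry_pairs \<Lambda>. (\<phi> x - \<psi> y)^2) + V 0 * real (card (bdry_pairs \<Lambda>))"
    by (simp add: sum.distrib sum_distrib_left case_prod_beta)
  show ?thesis
    using s1 s2 unfolding e1 e2 hamiltonian_def bond_energy_def bond_count_def inner_on_def bdry_pairs_def[symmetric]
    by (simp add: algebra_simps)
qed

lemma measurable_hamiltonian:
  fixes \<Lambda> :: "(int^'d) set"
  assumes fin: "finite \<Lambda>" and Vm: "V \<in> borel_measurable borel"
  shows "(\<lambda>\<phi>. hamiltonian V \<Lambda> \<psi> \<xi> \<phi>) \<in> borel_measurable (fieldM \<Lambda>)"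
proof -
  have m1: "(\<lambda>\<phi>. \<Sum>(x,y)\<in>nnpairs \<Lambda>. V (\<phi> x - \<phi> y)) \<in> borel_measurable (fieldM \<Lambda>)"
  proof (rule borel_measurable_pair_sum[OF finite_nnpairs[OF fin]])
    fix x y assume "(x,y) \<in> nnpairs \<Lambda>"
    hence xy: "x \<in> \<Lambda>" "y \<in> \<Lambda>" by (auto simp: nnpairs_def)
    have "(\<lambda>\<phi>. \<phi> x - \<phi> y) \<in> borel_measurable (fieldM \<Lambda>)"
      using measurable_field_component[OF xy(1)] measurable_field_component[OF xy(2)] by measurable
    thus "(\<lambda>\<phi>. V (\<phi> x - \<phi> y)) \<in> borel_measurable (fieldM \<Lambda>)"
      using measurable_compose[OF _ Vm] by blast
  qed
  have m2: "(\<lambda>\<phi>. \<Sum>(x,y)\<in>bdry_pairs \<Lambda>. V (\<phi> x - \<psi> y)) \<in> borel_measurable (fieldM \<Lambda>)"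
  proof (rule borel_measurable_pair_sum[OF finite_bdry_pairs[OF fin]])
    fix x y assume "(x,y) \<in> bdry_pairs \<Lambda>"
    hence xy: "x \<in> \<Lambda>" by (auto simp: bdry_pairs_def)
    have "(\<lambda>\<phi>. \<phi> x - \<psi> y) \<in> borel_measurable (fieldM \<Lambda>)"
      using measurable_field_component[OF xy(1)] by measurable
    thus "(\<lambda>\<phi>. V (\<phi> x - \<psi> y)) \<in> borel_measurable (fieldM \<Lambda>)"
      using measurable_compose[OF _ Vm] by blast
  qed
  have m3: "(\<lambda>\<phi>. inner_on \<Lambda> \<xi> (\<lambda>x. \<phi> x - 0)) \<in> borel_measurable (fieldM \<Lambda>)" by (rule measurable_inner_on_shifted[OF fin])
  show ?thesis unfolding hamiltonian_def bdry_pairs_def[symmetric]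
    using m1 m2 m3 unfolding inner_on_def by simp
qed

lemma quadratic_bounds_coeff_le:
  assumes lower: "\<forall>s. V s \<ge> A * s^2 - B" and up: "\<forall>s. V s \<le> V 0 + b * s^2"
  shows "A \<le> (b::real)"
proof (rule ccontr)
  assume "\<not> A \<le> b"
  hence Ab: "A - b > 0" by simp
  have BV: "V 0 + B \<ge> 0" using lower[rule_format, of 0] by simp
  define s where "s = sqrt ((V 0 + B + 1) / (A - b))"
  have s2: "s^2 = (V 0 + B + 1) / (A - b)" unfolding s_def using Ab BV by simp
  have "A * s^2 - B \<le> V 0 + b * s^2" using lower up by (meson order_trans)
  hence "(A - b) * s^2 \<le> V 0 + B" by (simp add: algebra_simps)
  also have "(A - b) * s^2 = V 0 + B + 1" unfolding s2 using Ab by simp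
  finally show False by simp
qed

lemma sigma_eq_ln_gaussian_partition:
  "sigma c \<Lambda> = - (1 / real (card \<Lambda>)) * ln (gaussian_partition c \<Lambda>)"
proof -
  have "(\<lambda>\<phi>. exp (- (c/2) * (\<Sum>(x,y)\<in>nnpairs \<Lambda>. (\<phi> x - \<phi> y)^2)
                 - c * (\<Sum>(x,y)\<in>{(x,y). x \<in> \<Lambda> \<and> y \<in> bdry \<Lambda> \<and> nbr x y}. (\<phi> x)^2)))
      = (\<lambda>\<phi>. exp (- c * dirichlet_energy \<Lambda> \<phi>))"
    by (rule ext) (simp add: dirichlet_energy_expand bdry_pairs_def algebra_simps)
  then show ?thesis unfolding sigma_def gaussian_partition_def by simp
qed

lemma ln_gaussian_partition_diff:
  fixes \<Lambda> :: "(int^'d) set"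
  assumes fin: "finite \<Lambda>"
  shows "ln (gaussian_partition a \<Lambda>) - ln (gaussian_partition b \<Lambda>)
     = - real (card \<Lambda>) * (sigma a \<Lambda> - sigma b \<Lambda>)"
proof (cases "\<Lambda> = {}")
  case True
  then have "dirichlet_energy \<Lambda> \<phi> = 0" for \<phi>
    by (simp add: dirichlet_energy_expand nnpairs_def bdry_pairs_def)
  then show ?thesis using True by (simp add: gaussian_partition_def)
next
  case False
  then have "real (card \<Lambda>) > 0" using fin by (simp add: card_gt_0_iff)
  then show ?thesis unfolding sigma_eq_ln_gaussian_partition by (simp add: algebra_simps)
qed

lemma exp_neg_hamiltonian_le:
  fixes \<Lambda> :: "(int^'d) set"
  assumes fin: "finite \<Lambda>" and lower: "\<forall>s. V s \<ge> A * s^2 - B"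
  shows "exp (- hamiltonian V \<Lambda> (tilt u) \<xi> \<phi> + s * dirichlet_energy \<Lambda> (\<lambda>x. \<phi> x - tilt u x))
    \<le> exp (B * bond_count \<Lambda> - A * tilt_energy \<Lambda> (tilt u) - 1/2 * inner_on \<Lambda> \<xi> (tilt u))
      * gaussian_weight (A - s) \<Lambda> (tilt u) \<xi> \<phi>"
proof -
  have "hamiltonian V \<Lambda> (tilt u) \<xi> \<phi> \<ge> A * (dirichlet_energy \<Lambda> (\<lambda>x. \<phi> x - tilt u x) + tilt_energy \<Lambda> (tilt u))
      - B * bond_count \<Lambda> + 1/2 * (inner_on \<Lambda> \<xi> (\<lambda>x. \<phi> x - tilt u x) + inner_on \<Lambda> \<xi> (tilt u))"
    using hamiltonian_lower[OF lower, where \<Lambda>=\<Lambda> and \<psi>="tilt u" and \<xi>=\<xi> and \<phi>=\<phi>]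
    unfolding bond_energy_tilt_decomp[OF fin] inner_on_split[of \<Lambda> \<xi> \<phi> "tilt u"] .
  then show ?thesis
    unfolding gaussian_weight_def exp_add[symmetric] by (simp add: algebra_simps)
qed

lemma exp_neg_hamiltonian_ge:
  fixes \<Lambda> :: "(int^'d) set"
  assumes fin: "finite \<Lambda>" and upper: "\<forall>s. V s \<le> V 0 + b * s^2"
  shows "exp (- V 0 * bond_count \<Lambda> - b * tilt_energy \<Lambda> (tilt u) - 1/2 * inner_on \<Lambda> \<xi> (tilt u))
      * gaussian_weight b \<Lambda> (tilt u) \<xi> \<phi>
    \<le> exp (- hamiltonian V \<Lambda> (tilt u) \<xi> \<phi>)"
proof -
  have "hamiltonian V \<Lambda> (tilt u) \<xi> \<phi> \<le> b * (dirichlet_energy \<Lambda> (\<lambda>x. \<phi> x - tilt u x) + tilt_energy \<Lambda> (tilt u))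
      + V 0 * bond_count \<Lambda> + 1/2 * (inner_on \<Lambda> \<xi> (\<lambda>x. \<phi> x - tilt u x) + inner_on \<Lambda> \<xi> (tilt u))"
    using hamiltonian_upper[OF upper, where \<Lambda>=\<Lambda> and \<psi>="tilt u" and \<xi>=\<xi> and \<phi>=\<phi>]
    unfolding bond_energy_tilt_decomp[OF fin] inner_on_split[of \<Lambda> \<xi> \<phi> "tilt u"] .
  then show ?thesis
    unfolding gaussian_weight_def exp_add[symmetric] by (simp add: algebra_simps)
qed

lemma ln_integral_ratio_le:
  fixes f d g h :: "'a \<Rightarrow> real"
  assumes "integrable M f" "integrable M d" "integrable M g" "integrable M h"
    and "\<And>x. x \<in> space M \<Longrightarrow> f x \<le> g x" "\<And>x. x \<in> space M \<Longrightarrow> h x \<le> d x"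
    and f_pos: "integral\<^sup>L M f > 0" and h_pos: "integral\<^sup>L M h > 0"
  shows "ln (integral\<^sup>L M f / integral\<^sup>L M d) \<le> ln (integral\<^sup>L M g) - ln (integral\<^sup>L M h)"
proof -
  have fg: "integral\<^sup>L M f \<le> integral\<^sup>L M g" and hd: "integral\<^sup>L M h \<le> integral\<^sup>L M d"
    using assms by (auto intro: integral_mono)
  then have "integral\<^sup>L M f / integral\<^sup>L M d \<le> integral\<^sup>L M g / integral\<^sup>L M h"
    using f_pos h_pos by (intro frac_le) auto
  moreover have "integral\<^sup>L M f / integral\<^sup>L M d > 0"
    using f_pos h_pos hd by simp
  ultimately have "ln (integral\<^sup>L M f / integral\<^sup>L M d) \<le> ln (integral\<^sup>L M g / integral\<^sup>L M h)"
    by simp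
  then show ?thesis
    using fg f_pos h_pos by (simp add: ln_div)
qed

lemma integrable_exp_neg_hamiltonian:
  fixes \<Lambda> :: "(int^'d) set"
  assumes fin: "finite \<Lambda>" and lower: "\<forall>s. V s \<ge> A * s^2 - B"
    and Vm: "V \<in> borel_measurable borel" and s: "s < A"
  shows "integrable (fieldM \<Lambda>)
    (\<lambda>\<phi>. exp (- hamiltonian V \<Lambda> (tilt u) \<xi> \<phi> + s * dirichlet_energy \<Lambda> (\<lambda>x. \<phi> x - tilt u x)))"
proof (rule Bochner_Integration.integrable_bound)
  let ?C = "B * bond_count \<Lambda> - A * tilt_energy \<Lambda> (tilt u) - 1/2 * inner_on \<Lambda> \<xi> (tilt u)"
  show "integrable (fieldM \<Lambda>) (\<lambda>\<phi>. exp ?C * gaussian_weight (A - s) \<Lambda> (tilt u) \<xi> \<phi>)"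
    using s by (intro integrable_mult_right gaussian_weight_integral(1)[OF fin]) auto
  show "(\<lambda>\<phi>. exp (- hamiltonian V \<Lambda> (tilt u) \<xi> \<phi> + s * dirichlet_energy \<Lambda> (\<lambda>x. \<phi> x - tilt u x)))
      \<in> borel_measurable (fieldM \<Lambda>)"
    using measurable_hamiltonian[OF fin Vm, where \<psi>="tilt u" and \<xi>=\<xi>]
      measurable_dirichlet_energy_shifted[OF fin, of "tilt u"]
    by measurable
  show "AE \<phi> in fieldM \<Lambda>.
      norm (exp (- hamiltonian V \<Lambda> (tilt u) \<xi> \<phi> + s * dirichlet_energy \<Lambda> (\<lambda>x. \<phi> x - tilt u x)))
      \<le> norm (exp ?C * gaussian_weight (A - s) \<Lambda> (tilt u) \<xi> \<phi>)"
    using exp_neg_hamiltonian_le[OF fin lower] by (intro AE_I2) (simp add: gaussian_weight_def)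
qed

lemma free_energy_le_gaussian:
  fixes \<Lambda> :: "(int^'d) set"
  assumes fin: "finite \<Lambda>" and \<beta>: "0 < \<beta>" "\<beta> < A" and b: "b > 0"
    and lower: "\<forall>s. V s \<ge> A * s^2 - B" and upper: "\<forall>s. V s \<le> V 0 + b * s^2"
    and Vm: "V \<in> borel_measurable borel"
  shows "free_energy V \<beta> u \<Lambda> \<xi> \<le> (B + V 0) * bond_count \<Lambda> + (b - A) * tilt_energy \<Lambda> (tilt u)
     + (1 / (A - \<beta>) - 1 / b) * (green_form \<Lambda> \<xi> / (16 * real (2 * CARD('d))))
     + ln (gaussian_partition (A - \<beta>) \<Lambda>) - ln (gaussian_partition b \<Lambda>)"
proof -
  let ?M = "fieldM \<Lambda>" and ?\<psi> = "tilt u" and ?X = "inner_on \<Lambda> \<xi> (tilt u)"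
  let ?Q = "\<lambda>\<phi>. dirichlet_energy \<Lambda> (\<lambda>x. \<phi> x - tilt u x)"
  define num where "num = (\<lambda>\<phi>. exp (- hamiltonian V \<Lambda> ?\<psi> \<xi> \<phi> + \<beta> * ?Q \<phi>))"
  define den where "den = (\<lambda>\<phi>. exp (- hamiltonian V \<Lambda> ?\<psi> \<xi> \<phi>))"
  define CU where "CU = B * bond_count \<Lambda> - A * tilt_energy \<Lambda> ?\<psi> - 1/2 * ?X"
  define CL where "CL = - V 0 * bond_count \<Lambda> - b * tilt_energy \<Lambda> ?\<psi> - 1/2 * ?X"
  define g where "g c C \<phi> = exp C * gaussian_weight c \<Lambda> ?\<psi> \<xi> \<phi>" for c C \<phi>
  define t where "t = green_form \<Lambda> \<xi> / (16 * real (2 * CARD('d)))"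
  have fe: "free_energy V \<beta> u \<Lambda> \<xi> = ln (integral\<^sup>L ?M num / integral\<^sup>L ?M den)"
    unfolding free_energy_def num_def den_def grad_energy_glue_tilt[OF fin] by (simp add: exp_add[symmetric])
  have num_le: "num \<phi> \<le> g (A - \<beta>) CU \<phi>" and den_ge: "g b CL \<phi> \<le> den \<phi>" for \<phi>
    using exp_neg_hamiltonian_le[OF fin lower, of u \<xi> \<phi> \<beta>] exp_neg_hamiltonian_ge[OF fin upper, of u \<xi> \<phi>]
    by (simp_all add: num_def den_def g_def CU_def CL_def)
  have g_int: "integrable ?M (g c C)" if "c > 0" for c C
    unfolding g_def by (intro integrable_mult_right gaussian_weight_integral(1)[OF fin that])
  have g_integral: "integral\<^sup>L ?M (g c C) = exp C * (exp (t / c) * gaussian_partition c \<Lambda>)"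
    if "c > 0" for c C
    unfolding g_def t_def using gaussian_weight_integral(2)[OF fin that] by (simp add: ac_simps)
  have num_int: "integrable ?M num" and den_int: "integrable ?M den"
    using integrable_exp_neg_hamiltonian[OF fin lower Vm, of \<beta> u \<xi>]
      integrable_exp_neg_hamiltonian[OF fin lower Vm, of 0 u \<xi>] \<beta>
    by (simp_all add: num_def den_def)
  have "integral\<^sup>L ?M num > 0"
    by (rule integral_fieldM_pos[OF fin num_int]) (simp add: num_def)
  moreover have "integral\<^sup>L ?M (g b CL) > 0"
    using gaussian_partition_pos[OF fin b] by (simp add: g_integral[OF b])
  ultimately have "free_energy V \<beta> u \<Lambda> \<xi> \<le> ln (integral\<^sup>L ?M (g (A - \<beta>) CU)) - ln (integral\<^sup>L ?M (g b CL))"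
    unfolding fe using \<beta> b num_le den_ge by (intro ln_integral_ratio_le num_int den_int g_int) auto
  also have "\<dots> = CU - CL + t / (A - \<beta>) - t / b
      + ln (gaussian_partition (A - \<beta>) \<Lambda>) - ln (gaussian_partition b \<Lambda>)"
    using \<beta> b gaussian_partition_pos[OF fin, of "A - \<beta>"] gaussian_partition_pos[OF fin b]
    by (simp add: g_integral ln_mult)
  also have "\<dots> = (B + V 0) * bond_count \<Lambda> + (b - A) * tilt_energy \<Lambda> (tilt u) + (1 / (A - \<beta>) - 1 / b) * t
     + ln (gaussian_partition (A - \<beta>) \<Lambda>) - ln (gaussian_partition b \<Lambda>)"
    by (simp add: CU_def CL_def algebra_simps)
  finally show ?thesis by (simp only: t_def)
qed

lemma free_energy_le:
  fixes \<Lambda> :: "(int^'d) set"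
  assumes fin: "finite \<Lambda>" and \<beta>: "0 < \<beta>" "\<beta> < A" and Ab: "A \<le> b"
    and lower: "\<forall>s. V s \<ge> A * s^2 - B" and upper: "\<forall>s. V s \<le> V 0 + b * s^2"
    and Vm: "V \<in> borel_measurable borel"
  shows "free_energy V \<beta> u \<Lambda> \<xi>
    \<le> - real (card \<Lambda>) * (sigma (A - \<beta>) \<Lambda> - sigma b \<Lambda>)
       + (\<Sum>(x,y)\<in>nnpairs (\<Lambda> \<union> bdry \<Lambda>). B + V 0)
       - (A - \<beta> - b) / 2 * (\<Sum>(x,y)\<in>nnpairs (\<Lambda> \<union> bdry \<Lambda>). (zdot (x - y) u)^2)
       + 1/2 * (1 / (A - \<beta>) - 1 / b) * green_form \<Lambda> \<xi>"
proof -
  let ?P = "nnpairs (\<Lambda> \<union> bdry \<Lambda>)" and ?G = "green_form \<Lambda> \<xi>" and ?D = "real (2 * CARD('d))"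
  have b: "b > 0" using \<beta> Ab by linarith
  have "B + V 0 \<ge> 0" using lower[rule_format, of 0] by simp
  then have "(B + V 0) * bond_count \<Lambda> \<le> (B + V 0) * real (card ?P)"
    by (rule mult_left_mono[OF bond_count_le[OF fin]])
  then have bonds: "(B + V 0) * bond_count \<Lambda> \<le> (\<Sum>(x,y)\<in>?P. B + V 0)"
    by (simp add: mult.commute)
  have "(b - A) * tilt_energy \<Lambda> (tilt u) \<le> (b - (A - \<beta>)) * tilt_energy \<Lambda> (tilt u)"
    using \<beta> tilt_energy_nonneg by (intro mult_right_mono) auto
  also have "\<dots> \<le> (b - (A - \<beta>)) * (1/2 * (\<Sum>(x,y)\<in>?P. (zdot (x - y) u)^2))"
    using Ab \<beta> by (intro mult_left_mono tilt_energy_le[OF fin]) auto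
  finally have tilt: "(b - A) * tilt_energy \<Lambda> (tilt u) \<le> - (A - \<beta> - b) / 2 * (\<Sum>(x,y)\<in>?P. (zdot (x - y) u)^2)"
    by (simp add: algebra_simps)
  have "CARD('d) > 0" by simp
  then have "?D \<ge> 1" by linarith
  then have "?G / (16 * ?D) \<le> ?G / 2"
    using green_form_nonneg[OF fin, of \<xi>] by (intro divide_left_mono) auto
  moreover have "1 / (A - \<beta>) - 1 / b \<ge> 0"
    using \<beta> Ab by (simp add: frac_le)
  ultimately have green: "(1 / (A - \<beta>) - 1 / b) * (?G / (16 * ?D)) \<le> 1/2 * (1 / (A - \<beta>) - 1 / b) * ?G"
    using mult_left_mono[of "?G / (16 * ?D)" "?G / 2" "1 / (A - \<beta>) - 1 / b"] by simp
  show ?thesis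
    using free_energy_le_gaussian[OF fin \<beta> b lower upper Vm, of u \<xi>] bonds tilt green
      ln_gaussian_partition_diff[OF fin, of "A - \<beta>" b]
    by linarith
qed

theorem lemma3p3:
  fixes V V' V'' :: "real \<Rightarrow> real" and A B C2 :: real and u :: "real^'d"
  assumes d3: "CARD('d) \<ge> 3"
    and dV: "\<forall>s. (V has_real_derivative V' s) (at s)"
    and dV': "\<forall>s. (V' has_real_derivative V'' s) (at s)"
    and contV'': "continuous_on UNIV V''"
    and even: "\<forall>s. V (- s) = V s"
    and Apos: "A > 0"
    and lower: "\<forall>s. V s \<ge> A * s^2 - B"
    and C2pos: "C2 > 0"
    and upper: "\<forall>s. V'' s \<le> C2"
  shows "\<exists>\<beta>0>0. \<forall>\<beta>. 0 < \<beta> \<and> \<beta> < \<beta>0 \<longrightarrow>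
           (\<forall>\<Lambda>::(int^'d) set. finite \<Lambda> \<longrightarrow> (\<forall>\<xi>::int^'d \<Rightarrow> real.
              free_energy V \<beta> u \<Lambda> \<xi>
              \<le> - real (card \<Lambda>) * (sigma (A - \<beta>) \<Lambda> - sigma (C2 / 2) \<Lambda>)
                 + (\<Sum>(x,y)\<in>nnpairs (\<Lambda> \<union> bdry \<Lambda>). B + V 0)
                 - (A - \<beta> - C2 / 2) / 2 * (\<Sum>(x,y)\<in>nnpairs (\<Lambda> \<union> bdry \<Lambda>). (zdot (x - y) u)^2)
                 + 1/2 * (1 / (A - \<beta>) - 2 / C2) * green_form \<Lambda> \<xi>))"
proof -
  have V_upper: "\<forall>s. V s \<le> V 0 + C2 / 2 * s^2"
    using even_quadratic_upper_bound[OF dV dV' even upper] by blast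
  have A_le: "A \<le> C2 / 2"
    by (rule quadratic_bounds_coeff_le[OF lower V_upper])
  have "continuous_on UNIV V"
    using dV DERIV_isCont by (blast intro: continuous_at_imp_continuous_on)
  then have V_meas: "V \<in> borel_measurable borel"
    by (rule borel_measurable_continuous_onI)
  have "free_energy V \<beta> u \<Lambda> \<xi>
              \<le> - real (card \<Lambda>) * (sigma (A - \<beta>) \<Lambda> - sigma (C2 / 2) \<Lambda>)
                 + (\<Sum>(x,y)\<in>nnpairs (\<Lambda> \<union> bdry \<Lambda>). B + V 0)
                 - (A - \<beta> - C2 / 2) / 2 * (\<Sum>(x,y)\<in>nnpairs (\<Lambda> \<union> bdry \<Lambda>). (zdot (x - y) u)^2)
                 + 1/2 * (1 / (A - \<beta>) - 2 / C2) * green_form \<Lambda> \<xi>"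
    if "0 < \<beta>" "\<beta> < A" "finite \<Lambda>" for \<beta> and \<Lambda> :: "(int^'d) set" and \<xi>
    using free_energy_le[OF that(3,1,2) A_le lower V_upper V_meas, of u \<xi>] by simp
  with Apos show ?thesis by blast
qed

end
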